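(* Let $n>1$, let $w$ be a primitive $n$-th root of unity and $c\in\mathbb{C}$, and let $f(h)=wh+c$. Then every simple (left) $\mathcal{H}(f)$-module is finite-dimensional. For $f=wh$, every finite-dimensional simple $\mathcal{H}(wh)$-module is isomorphic to one of: (a) the one-dimensional module $\mathbb{C}v$ with $xv=av$, $hv=0$, $yv=bv$ for some $a,b\in\mathbb{C}$; (b) $\mathbb{C}[t]/(t^n-a)$ with $ht^i=bw^it^i$, $xt^i=t^{i+1}$, $yt^i=(bw^i+\dot z)t^{i-1}$, for some $a,b\in\mathbb{C}^*$, $\dot z\in\mathbb{C}$; (c) $\mathbb{C}[t]/(t^n-a)$ with $ht^i=bw^it^i$, $xt^i=b(w^{i+1}-w^j)t^{i+1}$, $yt^i=t^{i-1}$, for some $a,b\in\mathbb{C}^*$ and $j\in\mathbb{Z}$; (d) $\mathbb{C}[t]/(t^n)$ with $yt^i=(1-w^i)\dot zt^{i-1}$, $ht^i=-w^i\dot zt^i$, $xt^i=t^{i+1}$ ($0\le i\le n-1$, $t^n=0$) for some $\dot z\in\mathbb{C}^*$. (In (b),(c) the indices are read modulo $n$ using $t^n=a$.)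
   Context: For $f(h)\in\mathbb{C}[h]$, $\mathcal{H}(f)$ is the unital associative $\mathbb{C}$-algebra generated by $x,y,h$ with relations $hx=xf(h)$, $yh=f(h)y$, $yx-xy=f(h)-h$. *)

theory Defs
  imports Complex_Main "HOL-Computational_Algebra.Polynomial"
begin

text \<open>A (left) module over H(f) is modelled as a complex subspace V of a complex vector
  space (scalar multiplication sc) with three linear operators X, Y, H (actions of x, y, h)
  preserving V and satisfying the defining relations of H(f) as operator identities on V.\<close>

definition op_poly :: "(complex \<Rightarrow> 'v::ab_group_add \<Rightarrow> 'v) \<Rightarrow> complex poly \<Rightarrow> ('v \<Rightarrow> 'v) \<Rightarrow> 'v \<Rightarrow> 'v" where
  "op_poly sc p T v = (\<Sum>i\<le>degree p. sc (coeff p i) ((T ^^ i) v))"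

definition lin_op_on :: "(complex \<Rightarrow> 'v::ab_group_add \<Rightarrow> 'v) \<Rightarrow> 'v set \<Rightarrow> ('v \<Rightarrow> 'v) \<Rightarrow> bool" where
  "lin_op_on sc V T \<longleftrightarrow> (\<forall>v\<in>V. T v \<in> V) \<and> (\<forall>u\<in>V. \<forall>v\<in>V. T (u + v) = T u + T v)
     \<and> (\<forall>c. \<forall>v\<in>V. T (sc c v) = sc c (T v))"

definition H_module :: "(complex \<Rightarrow> 'v::ab_group_add \<Rightarrow> 'v) \<Rightarrow> 'v set \<Rightarrow> complex poly
    \<Rightarrow> ('v \<Rightarrow> 'v) \<Rightarrow> ('v \<Rightarrow> 'v) \<Rightarrow> ('v \<Rightarrow> 'v) \<Rightarrow> bool" where
  "H_module sc V f X Y H \<longleftrightarrow> vector_space sc \<and> module.subspace sc V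
     \<and> lin_op_on sc V X \<and> lin_op_on sc V Y \<and> lin_op_on sc V H
     \<and> (\<forall>v\<in>V. H (X v) = X (op_poly sc f H v))
     \<and> (\<forall>v\<in>V. Y (H v) = op_poly sc f H (Y v))
     \<and> (\<forall>v\<in>V. Y (X v) - X (Y v) = op_poly sc f H v - H v)"

definition H_simple :: "(complex \<Rightarrow> 'v::ab_group_add \<Rightarrow> 'v) \<Rightarrow> 'v set
    \<Rightarrow> ('v \<Rightarrow> 'v) \<Rightarrow> ('v \<Rightarrow> 'v) \<Rightarrow> ('v \<Rightarrow> 'v) \<Rightarrow> bool" where
  "H_simple sc V X Y H \<longleftrightarrow> V \<noteq> {0} \<and>
     (\<forall>W. W \<subseteq> V \<and> module.subspace sc W \<and> (\<forall>w\<in>W. X w \<in> W \<and> Y w \<in> W \<and> H w \<in> W)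
        \<longrightarrow> W = {0} \<or> W = V)"

definition fin_dim :: "(complex \<Rightarrow> 'v::ab_group_add \<Rightarrow> 'v) \<Rightarrow> 'v set \<Rightarrow> bool" where
  "fin_dim sc V \<longleftrightarrow> (\<exists>B. finite B \<and> B \<subseteq> V \<and> module.span sc B = V)"

definition H_iso :: "(complex \<Rightarrow> 'u::ab_group_add \<Rightarrow> 'u) \<Rightarrow> 'u set \<Rightarrow> ('u \<Rightarrow> 'u) \<Rightarrow> ('u \<Rightarrow> 'u) \<Rightarrow> ('u \<Rightarrow> 'u)
    \<Rightarrow> (complex \<Rightarrow> 'v::ab_group_add \<Rightarrow> 'v) \<Rightarrow> 'v set \<Rightarrow> ('v \<Rightarrow> 'v) \<Rightarrow> ('v \<Rightarrow> 'v) \<Rightarrow> ('v \<Rightarrow> 'v) \<Rightarrow> bool" where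
  "H_iso sc1 V1 X1 Y1 H1 sc2 V2 X2 Y2 H2 \<longleftrightarrow> (\<exists>\<phi>. bij_betw \<phi> V1 V2
     \<and> (\<forall>u\<in>V1. \<forall>v\<in>V1. \<phi> (u + v) = \<phi> u + \<phi> v)
     \<and> (\<forall>c. \<forall>v\<in>V1. \<phi> (sc1 c v) = sc2 c (\<phi> v))
     \<and> (\<forall>v\<in>V1. \<phi> (X1 v) = X2 (\<phi> v) \<and> \<phi> (Y1 v) = Y2 (\<phi> v) \<and> \<phi> (H1 v) = H2 (\<phi> v)))"

definition primitive_root_of_unity :: "nat \<Rightarrow> complex \<Rightarrow> bool" where
  "primitive_root_of_unity n w \<longleftrightarrow> w ^ n = 1 \<and> (\<forall>k. 0 < k \<and> k < n \<longrightarrow> w ^ k \<noteq> 1)"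

text \<open>Model modules: C[t]/(g) with deg g = n is represented by the remainders, i.e. the
  polynomials of degree < n (basis t^0,...,t^(n-1)), with scalar multiplication smult.\<close>

definition polys_below :: "nat \<Rightarrow> complex poly set" where
  "polys_below n = {p. degree p < n}"

definition lin_ext :: "nat \<Rightarrow> (nat \<Rightarrow> complex poly) \<Rightarrow> complex poly \<Rightarrow> complex poly" where
  "lin_ext n g p = (\<Sum>j<n. smult (coeff p j) (g j))"

text \<open>t^k (k an integer) in C[t]/(t^n - a), a nonzero: t^k = a^(k div n) t^(k mod n).\<close>
definition qpow :: "nat \<Rightarrow> complex \<Rightarrow> int \<Rightarrow> complex poly" where
  "qpow n a k = smult (a powi (k div n)) (monom 1 (nat (k mod n)))"

definition modA_X :: "complex \<Rightarrow> complex poly \<Rightarrow> complex poly" where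
  "modA_X a = lin_ext 1 (\<lambda>j. smult a (monom 1 0))"
definition modA_H :: "complex poly \<Rightarrow> complex poly" where
  "modA_H = lin_ext 1 (\<lambda>j. 0)"
definition modA_Y :: "complex \<Rightarrow> complex poly \<Rightarrow> complex poly" where
  "modA_Y b = lin_ext 1 (\<lambda>j. smult b (monom 1 0))"

definition modB_H :: "nat \<Rightarrow> complex \<Rightarrow> complex \<Rightarrow> complex \<Rightarrow> complex poly \<Rightarrow> complex poly" where
  "modB_H n w a b = lin_ext n (\<lambda>i. smult (b * w ^ i) (qpow n a (int i)))"
definition modB_X :: "nat \<Rightarrow> complex \<Rightarrow> complex \<Rightarrow> complex \<Rightarrow> complex poly \<Rightarrow> complex poly" where
  "modB_X n w a b = lin_ext n (\<lambda>i. qpow n a (int i + 1))"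
definition modB_Y :: "nat \<Rightarrow> complex \<Rightarrow> complex \<Rightarrow> complex \<Rightarrow> complex \<Rightarrow> complex poly \<Rightarrow> complex poly" where
  "modB_Y n w a b z = lin_ext n (\<lambda>i. smult (b * w ^ i + z) (qpow n a (int i - 1)))"

definition modC_H :: "nat \<Rightarrow> complex \<Rightarrow> complex \<Rightarrow> complex \<Rightarrow> complex poly \<Rightarrow> complex poly" where
  "modC_H n w a b = lin_ext n (\<lambda>i. smult (b * w ^ i) (qpow n a (int i)))"
definition modC_X :: "nat \<Rightarrow> complex \<Rightarrow> complex \<Rightarrow> complex \<Rightarrow> int \<Rightarrow> complex poly \<Rightarrow> complex poly" where
  "modC_X n w a b j = lin_ext n (\<lambda>i. smult (b * (w ^ (i + 1) - w powi j)) (qpow n a (int i + 1)))"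
definition modC_Y :: "nat \<Rightarrow> complex \<Rightarrow> complex \<Rightarrow> complex poly \<Rightarrow> complex poly" where
  "modC_Y n w a = lin_ext n (\<lambda>i. qpow n a (int i - 1))"

definition modD_Y :: "nat \<Rightarrow> complex \<Rightarrow> complex \<Rightarrow> complex poly \<Rightarrow> complex poly" where
  "modD_Y n w z = lin_ext n (\<lambda>i. if i = 0 then 0 else smult ((1 - w ^ i) * z) (monom 1 (i - 1)))"
definition modD_H :: "nat \<Rightarrow> complex \<Rightarrow> complex \<Rightarrow> complex poly \<Rightarrow> complex poly" where
  "modD_H n w z = lin_ext n (\<lambda>i. smult (- (w ^ i) * z) (monom 1 i))"
definition modD_X :: "nat \<Rightarrow> complex poly \<Rightarrow> complex poly" where
  "modD_X n = lin_ext n (\<lambda>i. if i + 1 < n then monom 1 (i + 1) else 0)"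

end

theory Submission
  imports Defs "HOL-Computational_Algebra.Fundamental_Theorem_Algebra"
    "HOL-Library.Countable_Set" "HOL-Analysis.Continuum_Not_Denumerable"
begin

text \<open>
  Because \<open>w \<noteq> 1\<close>, the substitution \<open>h \<mapsto> h - c/(1 - w)\<close> reduces everything to \<open>f = wh\<close>.
  In \<open>H(wh)\<close> the elements \<open>h\<^sup>n\<close>, \<open>x\<^sup>n\<close>, \<open>y\<^sup>n\<close> and the Casimir element \<open>xy - h\<close> are central.
  A simple module is spanned by the countably many words in \<open>x, y, h\<close> applied to one nonzero
  vector, so by Dixmier's form of Schur's lemma (which uses that \<open>\<complex>\<close> is uncountable) every
  central element acts by a scalar.  Hence \<open>h\<close> has an eigenvector \<open>v\<close>, and the chains \<open>x\<^sup>i v\<close>,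
  \<open>y\<^sup>i v\<close> (\<open>i < n\<close>) span a submodule: \<open>V\<close> is finite-dimensional.  For the classification we
  split on whether the eigenvalue of \<open>v\<close> is zero and on which of \<open>x\<^sup>n\<close>, \<open>y\<^sup>n\<close> vanish; each case
  yields an explicit basis on which \<open>x, y, h\<close> act by the matrices of one of the model modules
  (a)-(d), and a coordinate map gives the isomorphism.
\<close>

section \<open>Linear algebra over \<open>\<complex>\<close>\<close>

locale complex_vs = vector_space scale
  for scale :: "complex \<Rightarrow> 'v::ab_group_add \<Rightarrow> 'v" (infixr \<open>*s\<close> 75)
begin

lemma lin_in: "lin_op_on scale V T \<Longrightarrow> v \<in> V \<Longrightarrow> T v \<in> V"
  unfolding lin_op_on_def by blast

lemma lin_add: "lin_op_on scale V T \<Longrightarrow> u \<in> V \<Longrightarrow> v \<in> V \<Longrightarrow> T (u + v) = T u + T v"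
  unfolding lin_op_on_def by blast

lemma lin_scale: "lin_op_on scale V T \<Longrightarrow> v \<in> V \<Longrightarrow> T (c *s v) = c *s T v"
  unfolding lin_op_on_def by blast

lemma lin_zero: "subspace V \<Longrightarrow> lin_op_on scale V T \<Longrightarrow> T 0 = 0"
  using lin_scale[of V T 0 0] subspace_0 by simp

lemma lin_diff:
  assumes "subspace V" "lin_op_on scale V T" "u \<in> V" "v \<in> V"
  shows "T (u - v) = T u - T v"
proof -
  have "T (u + (-1) *s v) = T u + (-1) *s T v"
    using assms lin_add lin_scale subspace_scale by metis
  then show ?thesis by simp
qed

lemma lin_comb:
  assumes "subspace V" "lin_op_on scale V T" "\<And>i. i \<in> A \<Longrightarrow> f i \<in> V"
  shows "T (\<Sum>i\<in>A. c i *s f i) = (\<Sum>i\<in>A. c i *s T (f i))"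
  using assms(3)
proof (induction A rule: infinite_finite_induct)
  case (insert x F)
  then show ?case
    using assms(1,2) by (simp add: lin_add lin_scale subspace_sum subspace_scale)
qed (use assms lin_zero in simp_all)

lemma lin_pow: "lin_op_on scale V T \<Longrightarrow> lin_op_on scale V (T ^^ k)"
  by (induction k) (simp_all add: lin_op_on_def)

lemma lin_shift: "subspace V \<Longrightarrow> lin_op_on scale V T \<Longrightarrow> lin_op_on scale V (\<lambda>v. T v - c *s v)"
  unfolding lin_op_on_def by (auto simp: subspace_diff subspace_scale algebra_simps)

lemma funpow_nonzero_below:
  assumes V: "subspace V" "lin_op_on scale V T" and v: "v \<in> V"
    and Tn: "(T ^^ n) v \<noteq> 0" and i: "i \<le> n"
  shows "(T ^^ i) v \<noteq> 0"
proof
  assume "(T ^^ i) v = 0"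
  moreover have "(T ^^ n) v = (T ^^ ((n - i) + i)) v" using i by simp
  then have "(T ^^ n) v = (T ^^ (n - i)) ((T ^^ i) v)" by (simp add: funpow_add)
  ultimately show False using Tn lin_zero[OF V(1) lin_pow[OF V(2)]] by simp
qed

lemma op_poly_bound:
  assumes "degree p < N"
  shows "op_poly scale p T v = (\<Sum>i<N. coeff p i *s (T ^^ i) v)"
  unfolding op_poly_def
  using assms by (intro sum.mono_neutral_left) (auto simp: coeff_eq_0)

lemma op_poly_const: "op_poly scale [:a:] T v = a *s v"
  by (simp add: op_poly_def)

lemma op_poly_add: "op_poly scale (p + q) T v = op_poly scale p T v + op_poly scale q T v"
proof -
  let ?N = "Suc (max (degree p) (degree q))"
  have "degree (p + q) < ?N" by (simp add: degree_add_le less_Suc_eq_le)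
  then show ?thesis
    by (simp add: op_poly_bound[where N="?N"] sum.distrib scale_left_distrib)
qed

lemma op_poly_smult: "op_poly scale (smult a p) T v = a *s op_poly scale p T v"
  using op_poly_bound[of "smult a p" "Suc (degree p)"] op_poly_bound[of p "Suc (degree p)"]
  by (simp add: scale_sum_right del: sum.lessThan_Suc)

lemma op_poly_sum: "op_poly scale (\<Sum>i\<in>A. f i) T v = (\<Sum>i\<in>A. op_poly scale (f i) T v)"
  using op_poly_const[of 0 T v]
  by (induction A rule: infinite_finite_induct) (simp_all add: op_poly_add)

lemma op_poly_pCons:
  assumes V: "subspace V" "lin_op_on scale V T" "v \<in> V"
  shows "op_poly scale (pCons a p) T v = a *s v + T (op_poly scale p T v)"
proof -
  let ?M = "Suc (degree p)"
  have "op_poly scale (pCons a p) T v = (\<Sum>i<Suc ?M. coeff (pCons a p) i *s (T ^^ i) v)"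
    by (rule op_poly_bound) (simp add: degree_pCons_le le_imp_less_Suc)
  also have "\<dots> = a *s v + (\<Sum>i<?M. coeff p i *s T ((T ^^ i) v))"
    by (simp add: sum.lessThan_Suc_shift funpow_swap1 del: sum.lessThan_Suc)
  also have "(\<Sum>i<?M. coeff p i *s T ((T ^^ i) v)) = T (\<Sum>i<?M. coeff p i *s (T ^^ i) v)"
    using V by (intro lin_comb[symmetric]) (auto intro: lin_in[OF lin_pow])
  also have "(\<Sum>i<?M. coeff p i *s (T ^^ i) v) = op_poly scale p T v"
    by (rule op_poly_bound[symmetric]) simp
  finally show ?thesis .
qed

lemma op_poly_lin:
  assumes V: "subspace V" "lin_op_on scale V T"
  shows "lin_op_on scale V (op_poly scale p T)"
proof -
  have Tk: "lin_op_on scale V (T ^^ k)" for k using lin_pow[OF V(2)] .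
  show ?thesis
    unfolding lin_op_on_def op_poly_def
  proof (intro conjI ballI allI)
    fix v assume v: "v \<in> V"
    show "(\<Sum>i\<le>degree p. coeff p i *s (T ^^ i) v) \<in> V"
      using V(1) v by (intro subspace_sum subspace_scale lin_in[OF Tk])
    show "(\<Sum>i\<le>degree p. coeff p i *s (T ^^ i) (c *s v)) = c *s (\<Sum>i\<le>degree p. coeff p i *s (T ^^ i) v)" for c
      using v by (simp add: lin_scale[OF Tk] scale_sum_right mult.commute)
  next
    fix u v assume "u \<in> V" "v \<in> V"
    then show "(\<Sum>i\<le>degree p. coeff p i *s (T ^^ i) (u + v))
        = (\<Sum>i\<le>degree p. coeff p i *s (T ^^ i) u) + (\<Sum>i\<le>degree p. coeff p i *s (T ^^ i) v)"
      by (simp add: lin_add[OF Tk] scale_right_distrib sum.distrib)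
  qed
qed

lemma op_poly_in: "subspace V \<Longrightarrow> lin_op_on scale V T \<Longrightarrow> v \<in> V \<Longrightarrow> op_poly scale p T v \<in> V"
  using op_poly_lin lin_in by blast

lemma op_poly_mult:
  assumes V: "subspace V" "lin_op_on scale V T" "v \<in> V"
  shows "op_poly scale (p * q) T v = op_poly scale p T (op_poly scale q T v)"
proof (induction p rule: pCons_induct)
  case 0 then show ?case using op_poly_const[of 0] by simp
next
  case (pCons a p)
  have q: "op_poly scale q T v \<in> V" using op_poly_in V by blast
  have "op_poly scale (pCons a p * q) T v
      = a *s op_poly scale q T v + op_poly scale (pCons 0 (p * q)) T v"
    by (simp add: op_poly_add op_poly_smult)
  also have "op_poly scale (pCons 0 (p * q)) T v = T (op_poly scale (p * q) T v)"
    using op_poly_pCons[OF V] by simp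
  finally show ?case using pCons op_poly_pCons[OF V(1,2) q] by simp
qed

lemma op_poly_eigen:
  assumes V: "subspace V" "lin_op_on scale V T" "e \<in> V" and e: "T e = \<mu> *s e"
  shows "op_poly scale p T e = poly p \<mu> *s e"
proof (induction p rule: pCons_induct)
  case 0 then show ?case using op_poly_const[of 0] by simp
next
  case (pCons a p)
  then show ?case using op_poly_pCons[OF V] e lin_scale[OF V(2,3)]
    by (simp add: scale_left_distrib)
qed

lemma op_poly_monom:
  assumes V: "subspace V" "lin_op_on scale V T" "v \<in> V"
  shows "op_poly scale (monom 1 k) T v = (T ^^ k) v"
proof (induction k)
  case 0 then show ?case by (simp add: op_poly_const monom_0)
next
  case (Suc k)
  then show ?case using op_poly_pCons[OF V, of 0 "monom 1 k"] by (simp add: monom_Suc)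
qed

lemma op_poly_linear_factor:
  assumes V: "subspace V" "lin_op_on scale V T" "v \<in> V"
  shows "op_poly scale [:a, 1:] T v = a *s v + T v"
  using op_poly_pCons[OF V, of a "[:1:]"] op_poly_const[of 1 T v] by simp

text \<open>Over \<open>\<complex>\<close>, a nonzero polynomial splits into linear factors; hence if \<open>T\<close> has no
  eigenvector in \<open>V\<close>, every nonzero polynomial in \<open>T\<close> is injective on \<open>V\<close>.\<close>

lemma op_poly_inj:
  assumes V: "subspace V" "lin_op_on scale V T"
    and noeig: "\<And>\<mu> u. u \<in> V \<Longrightarrow> T u = \<mu> *s u \<Longrightarrow> u = 0"
  shows "p \<noteq> 0 \<Longrightarrow> v \<in> V \<Longrightarrow> op_poly scale p T v = 0 \<Longrightarrow> v = 0"
proof (induction "degree p" arbitrary: p v rule: less_induct)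
  case less
  show ?case
  proof (cases "degree p = 0")
    case True
    with less show ?thesis by (metis degree_eq_zeroE op_poly_const pCons_eq_0_iff scale_eq_0_iff)
  next
    case False
    then obtain r where "poly p r = 0"
      using constant_degree[of p] fundamental_theorem_of_algebra[of p] by auto
    then obtain q where pq: "p = [:-r, 1:] * q" using poly_eq_0_iff_dvd by (metis dvdE)
    with less have q0: "q \<noteq> 0" by auto
    have "degree p = degree [:-r, 1:] + degree q"
      unfolding pq using q0 by (intro degree_mult_eq) simp_all
    then have dq: "degree q < degree p" by simp
    let ?u = "op_poly scale q T v"
    have u: "?u \<in> V" using op_poly_in V less by blast
    have "0 = op_poly scale [:-r, 1:] T ?u"
      using less(4) unfolding pq op_poly_mult[OF V less(3)] by simp
    also have "\<dots> = (-r) *s ?u + T ?u" by (rule op_poly_linear_factor[OF V u])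
    finally have "T ?u = r *s ?u" by (simp add: add_eq_0_iff)
    then show ?thesis using noeig[OF u] less(1)[OF dq q0 less(3)] by blast
  qed
qed

lemma eigenvectors_independent:
  fixes m :: nat
  assumes V: "subspace V" "lin_op_on scale V T"
    and e: "\<And>i. i < m \<Longrightarrow> e i \<in> V" "\<And>i. i < m \<Longrightarrow> e i \<noteq> 0"
    and eig: "\<And>i. i < m \<Longrightarrow> T (e i) = \<mu> i *s e i"
    and dist: "inj_on \<mu> {..<m}"
    and rel: "(\<Sum>i<m. c i *s e i) = 0"
  shows "\<forall>k<m. c k = 0"
proof (intro allI impI)
  fix k assume k: "k < m"
  define Q where "Q = (\<Prod>j\<in>{..<m}-{k}. [:-\<mu> j, 1:])"
  have vanish: "poly Q (\<mu> i) = 0" if "i < m" "i \<noteq> k" for i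
    using that unfolding Q_def poly_prod by (intro prod_zero_iff[THEN iffD2] bexI[of _ i]) simp_all
  have "0 = op_poly scale Q T (\<Sum>i<m. c i *s e i)"
    using rel lin_zero[OF V(1) op_poly_lin[OF V]] by simp
  also have "\<dots> = (\<Sum>i<m. (c i * poly Q (\<mu> i)) *s e i)"
    using lin_comb[OF V(1) op_poly_lin[OF V], of "{..<m}" e Q c] e(1) op_poly_eigen[OF V e(1) eig]
    by simp
  also have "\<dots> = (c k * poly Q (\<mu> k)) *s e k"
    using k vanish by (intro sum.mono_neutral_right[where S="{k}", simplified]) auto
  finally have "(c k * poly Q (\<mu> k)) *s e k = 0" by simp
  moreover have "poly Q (\<mu> k) \<noteq> 0"
    unfolding Q_def poly_prod using dist k by (auto dest: inj_onD)
  ultimately show "c k = 0" using e(2)[OF k] by simp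
qed

subsection \<open>Dixmier's lemma\<close>

text \<open>In the span of a countable set every independent set is countable: each element lies
  in the span of a finite subset, and an independent set meets such a span in a finite set.\<close>

lemma independent_in_countable_span:
  assumes S: "countable S" and A: "A \<subseteq> span S" and ind: "independent A"
  shows "countable A"
proof -
  have "A \<subseteq> (\<Union>F\<in>{F. finite F \<and> F \<subseteq> S}. A \<inter> span F)"
  proof
    fix a assume a: "a \<in> A"
    then obtain t r where t: "finite t" "t \<subseteq> S" "a = (\<Sum>x\<in>t. r x *s x)"
      using A unfolding span_explicit by blast
    have "a \<in> span t" unfolding t(3) by (intro span_sum span_scale span_base)
    then show "a \<in> (\<Union>F\<in>{F. finite F \<and> F \<subseteq> S}. A \<inter> span F)" using t a by blast
  qed
  moreover have "countable (\<Union>F\<in>{F. finite F \<and> F \<subseteq> S}. A \<inter> span F)"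
  proof (rule countable_UN[OF countable_Collect_finite_subset[OF S]])
    fix F assume "F \<in> {F. finite F \<and> F \<subseteq> S}"
    moreover have "independent (A \<inter> span F)" using independent_mono[OF ind] by blast
    ultimately show "countable (A \<inter> span F)"
      using independent_span_bound[of F "A \<inter> span F"] by (auto intro: countable_finite)
  qed
  ultimately show ?thesis using countable_subset by blast
qed

text \<open>A linear dependence among resolvent preimages \<open>R \<mu> = (T - \<mu>)\<inverse> v\<^sub>0\<close> yields a
  nonzero polynomial annihilating \<open>v\<^sub>0\<close>: multiply the relation by \<open>\<Prod>\<^sub>k (T - k)\<close>.\<close>

lemma resolvent_relation_annihilates:
  assumes V: "subspace V" "lin_op_on scale V T"
    and R: "\<And>\<mu>. R \<mu> \<in> V" "\<And>\<mu>. T (R \<mu>) - \<mu> *s R \<mu> = v0"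
    and L: "finite L" "(\<Sum>k\<in>L. c k *s R k) = 0" "k0 \<in> L" "c k0 \<noteq> 0"
  shows "\<exists>G. G \<noteq> 0 \<and> op_poly scale G T v0 = 0"
proof -
  define P where "P = (\<Prod>k\<in>L. [:-k, 1:])"
  define Q where "Q \<mu> = (\<Prod>k\<in>L-{\<mu>}. [:-k, 1:])" for \<mu>
  have PR: "op_poly scale P T (R \<mu>) = op_poly scale (Q \<mu>) T v0" if "\<mu> \<in> L" for \<mu>
  proof -
    have "P = Q \<mu> * [:-\<mu>, 1:]"
      unfolding P_def Q_def using prod.remove[OF L(1) that, of "\<lambda>k. [:-k, 1:]"]
      by (simp add: mult.commute)
    then have "op_poly scale P T (R \<mu>) = op_poly scale (Q \<mu>) T (op_poly scale [:-\<mu>, 1:] T (R \<mu>))"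
      using op_poly_mult[OF V R(1)] by metis
    also have "op_poly scale [:-\<mu>, 1:] T (R \<mu>) = v0"
      using op_poly_linear_factor[OF V R(1)] R(2)[of \<mu>] by simp
    finally show ?thesis .
  qed
  define G where "G = (\<Sum>k\<in>L. smult (c k) (Q k))"
  have "op_poly scale G T v0 = (\<Sum>k\<in>L. c k *s op_poly scale P T (R k))"
    unfolding G_def by (simp add: op_poly_sum op_poly_smult PR)
  also have "\<dots> = op_poly scale P T (\<Sum>k\<in>L. c k *s R k)"
    using lin_comb[OF V(1) op_poly_lin[OF V], of L R P c] R(1) by simp
  also have "\<dots> = 0" using L(2) lin_zero[OF V(1) op_poly_lin[OF V]] by simp
  finally have "op_poly scale G T v0 = 0" .
  moreover have "poly G k0 = c k0 * poly (Q k0) k0"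
    unfolding G_def poly_sum poly_smult using L
    by (intro sum.mono_neutral_right[where S="{k0}", simplified]) (auto simp: Q_def poly_prod)
  then have "G \<noteq> 0" using L unfolding Q_def by (auto simp: poly_prod)
  ultimately show ?thesis by blast
qed

text \<open>Dixmier's argument: on a space of countable dimension over the uncountable field
  \<open>\<complex>\<close>, an operator without eigenvectors cannot have all \<open>T - \<mu>\<close> hitting a fixed
  \<open>v\<^sub>0 \<noteq> 0\<close>: the uncountably many preimages \<open>R \<mu>\<close> would be dependent, giving an
  annihilating polynomial, contradicting injectivity of polynomials in \<open>T\<close>.\<close>

lemma no_resolvent_family:
  assumes S: "countable S" "V \<subseteq> span S"
    and V: "subspace V" "lin_op_on scale V T"
    and v0: "v0 \<in> V" "v0 \<noteq> 0"
    and noeig: "\<And>\<mu> u. u \<in> V \<Longrightarrow> T u = \<mu> *s u \<Longrightarrow> u = 0"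
    and hit: "\<And>\<mu>. \<exists>u\<in>V. T u - \<mu> *s u = v0"
  shows False
proof -
  define R where "R \<mu> = (SOME u. u \<in> V \<and> T u - \<mu> *s u = v0)" for \<mu>
  have R: "R \<mu> \<in> V" "T (R \<mu>) - \<mu> *s R \<mu> = v0" for \<mu>
    using someI_ex[OF hit[of \<mu>, unfolded Bex_def]] unfolding R_def by auto
  have injR: "inj R"
  proof (rule injI)
    fix a b assume ab: "R a = R b"
    have "T (R a) - a *s R a = T (R a) - b *s R a"
      using R(2)[of a] R(2)[of b] ab by simp
    moreover have "R a \<noteq> 0" using R(2)[of a] v0(2) lin_zero[OF V] by auto
    ultimately show "a = b" by simp
  qed
  have "dependent (range R)"
  proof (rule ccontr)
    assume ind: "independent (range R)"
    have "range R \<subseteq> span S" using R(1) S(2) by blast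
    then have "countable (range R)" using independent_in_countable_span[OF S(1) _ ind] by blast
    then have "countable (UNIV :: complex set)" by (rule countable_image_inj_on) (rule injR)
    then show False using uncountable_UNIV_complex by blast
  qed
  then obtain t u where t: "finite t" "t \<subseteq> range R" "(\<Sum>x\<in>t. u x *s x) = 0" "\<exists>x\<in>t. u x \<noteq> 0"
    unfolding dependent_explicit by blast
  define L where "L = R -` t"
  have L: "finite L" "t = R ` L"
    unfolding L_def using t(1) injR t(2) by (auto intro: finite_vimageI)
  have "(\<Sum>k\<in>L. u (R k) *s R k) = 0"
    using t(3) sum.reindex[OF inj_on_subset[OF injR subset_UNIV], of "\<lambda>x. u x *s x" L] L(2)
    by (simp add: comp_def)
  moreover obtain k0 where "k0 \<in> L" "u (R k0) \<noteq> 0" using t(4) L(2) by blast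
  ultimately obtain G where "G \<noteq> 0" "op_poly scale G T v0 = 0"
    using resolvent_relation_annihilates[OF V R L(1), where c="\<lambda>k. u (R k)"] by blast
  then show False using op_poly_inj[OF V, of G v0] noeig v0 by blast
qed

definition coord :: "nat \<Rightarrow> (nat \<Rightarrow> 'v) \<Rightarrow> complex poly \<Rightarrow> 'v" where
  "coord m e p = (\<Sum>j<m. coeff p j *s e j)"

lemma coord_add: "coord m e (p + q) = coord m e p + coord m e q"
  unfolding coord_def by (simp add: scale_left_distrib sum.distrib)

lemma coord_smult: "coord m e (smult c p) = c *s coord m e p"
  unfolding coord_def by (simp add: scale_sum_right)

lemma coord_diff: "coord m e (p - q) = coord m e p - coord m e q"
  unfolding coord_def by (simp add: scale_left_diff_distrib sum_subtractf)

lemma coord_monom: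
  assumes "k < m"
  shows "coord m e (smult s (monom 1 k)) = s *s e k"
proof -
  have "coord m e (smult s (monom 1 k)) = (\<Sum>j<m. if j = k then s *s e k else 0)"
    unfolding coord_def by (rule sum.cong) (auto simp: coeff_monom)
  then show ?thesis using assms by simp
qed

lemma coord_monom1: "k < m \<Longrightarrow> coord m e (monom 1 k) = e k"
  using coord_monom[of k m e 1] by simp

lemma coord_zero: "coord m e 0 = 0"
  unfolding coord_def by simp

lemma coord_in: "subspace V \<Longrightarrow> (\<And>i. i < m \<Longrightarrow> e i \<in> V) \<Longrightarrow> coord m e p \<in> V"
  unfolding coord_def by (auto intro!: subspace_sum subspace_scale)

lemma coord_lin_ext:
  assumes V: "subspace V" "lin_op_on scale V T" and e: "\<And>i. i < m \<Longrightarrow> e i \<in> V"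
    and g: "\<And>i. i < m \<Longrightarrow> coord m e (g i) = T (e i)"
  shows "coord m e (lin_ext m g p) = T (coord m e p)"
proof -
  have "coord m e (lin_ext m g p) = (\<Sum>j<m. \<Sum>i<m. (coeff p i * coeff (g i) j) *s e j)"
    unfolding coord_def lin_ext_def by (simp add: coeff_sum scale_sum_left)
  also have "\<dots> = (\<Sum>i<m. coeff p i *s coord m e (g i))"
    unfolding coord_def by (subst sum.swap) (simp add: scale_sum_right)
  also have "\<dots> = (\<Sum>i<m. coeff p i *s T (e i))" by (simp add: g)
  also have "\<dots> = T (coord m e p)"
    unfolding coord_def using lin_comb[OF V, of "{..<m}" e "coeff p"] e by simp
  finally show ?thesis .
qed

lemma coord_image_subspace:
  assumes "0 < m"
  shows "subspace (coord m e ` polys_below m)"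
proof (rule subspaceI)
  have "coord m e 0 = 0" by (simp add: coord_def)
  then show "0 \<in> coord m e ` polys_below m"
    using assms unfolding polys_below_def by (metis degree_0 image_eqI mem_Collect_eq)
  show "x + y \<in> coord m e ` polys_below m"
    if xy: "x \<in> coord m e ` polys_below m" "y \<in> coord m e ` polys_below m" for x y
  proof -
    obtain p q where "p \<in> polys_below m" "q \<in> polys_below m" "x = coord m e p" "y = coord m e q"
      using xy by blast
    moreover have "degree (p + q) \<le> max (degree p) (degree q)" by (rule degree_add_le_max)
    ultimately show ?thesis
      unfolding polys_below_def by (intro image_eqI[of _ _ "p + q"]) (auto simp: coord_add)
  qed
  show "c *s x \<in> coord m e ` polys_below m" if x: "x \<in> coord m e ` polys_below m" for c x
  proof -
    obtain p where "p \<in> polys_below m" "x = coord m e p" using x by blast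
    moreover have "degree (smult c p) \<le> degree p" by (rule degree_smult_le)
    ultimately show ?thesis
      unfolding polys_below_def by (intro image_eqI[of _ _ "smult c p"]) (auto simp: coord_smult)
  qed
qed

lemma coord_inj:
  assumes indep: "\<And>c. (\<Sum>i<m. c i *s e i) = 0 \<Longrightarrow> \<forall>i<m. c i = 0"
  shows "inj_on (coord m e) (polys_below m)"
proof (rule inj_onI)
  fix p q assume pq: "p \<in> polys_below m" "q \<in> polys_below m" "coord m e p = coord m e q"
  have "coord m e (p - q) = 0"
    using pq(3) coord_diff by simp
  then have low: "\<forall>i<m. coeff (p - q) i = 0" using indep unfolding coord_def by blast
  have "degree (p - q) < m"
    using pq(1,2) degree_diff_le_max[of p q] unfolding polys_below_def by simp
  have "p - q = 0"
  proof (rule poly_eqI)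
    fix i
    show "coeff (p - q) i = coeff 0 i"
      using low coeff_eq_0[of "p - q" i] \<open>degree (p - q) < m\<close> by (cases "i < m") auto
  qed
  then show "p = q" by simp
qed

end

section \<open>Simple \<open>H(wh)\<close>-modules\<close>

locale simple_wh_module = complex_vs sc
  for sc :: "complex \<Rightarrow> 'v::ab_group_add \<Rightarrow> 'v" (infixr \<open>*s\<close> 75) +
  fixes V :: "'v set" and X Y H :: "'v \<Rightarrow> 'v" and w :: complex and n :: nat
  assumes subV: "subspace V"
    and linX: "lin_op_on sc V X" and linY: "lin_op_on sc V Y" and linH: "lin_op_on sc V H"
    and hx_rel: "\<And>v. v \<in> V \<Longrightarrow> H (X v) = X (w *s H v)"
    and yh_rel: "\<And>v. v \<in> V \<Longrightarrow> Y (H v) = w *s H (Y v)"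
    and yx_rel: "\<And>v. v \<in> V \<Longrightarrow> Y (X v) - X (Y v) = (w - 1) *s H v"
    and simple: "H_simple sc V X Y H"
    and n_gt1: "1 < n" and prim: "primitive_root_of_unity n w"
begin

lemma invariant_subspace_eq:
  assumes "W \<subseteq> V" "subspace W" "\<And>x. x \<in> W \<Longrightarrow> X x \<in> W \<and> Y x \<in> W \<and> H x \<in> W"
    and "u \<in> W" "u \<noteq> 0"
  shows "W = V"
  using simple assms unfolding H_simple_def by blast

lemma V_nonzero: "\<exists>v\<in>V. v \<noteq> 0"
  using simple subspace_0[OF subV] unfolding H_simple_def by blast

lemma in_V:
  assumes "v \<in> V"
  shows "X v \<in> V" "Y v \<in> V" "H v \<in> V" "(X ^^ k) v \<in> V" "(Y ^^ k) v \<in> V" "(H ^^ k) v \<in> V"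
    "c *s v \<in> V"
  using assms lin_in[OF linX] lin_in[OF linY] lin_in[OF linH] lin_in[OF lin_pow[OF linX]]
    lin_in[OF lin_pow[OF linY]] lin_in[OF lin_pow[OF linH]] subspace_scale[OF subV]
  by simp_all

lemma add_in_V: "u \<in> V \<Longrightarrow> v \<in> V \<Longrightarrow> u + v \<in> V"
  and diff_in_V: "u \<in> V \<Longrightarrow> v \<in> V \<Longrightarrow> u - v \<in> V"
  using subspace_add[OF subV] subspace_diff[OF subV] by blast+

lemma gen_homogeneous:
  assumes "v \<in> V"
  shows "X (c *s v) = c *s X v" "Y (c *s v) = c *s Y v" "H (c *s v) = c *s H v"
    "(X ^^ k) (c *s v) = c *s (X ^^ k) v" "(Y ^^ k) (c *s v) = c *s (Y ^^ k) v"
    "(H ^^ k) (c *s v) = c *s (H ^^ k) v"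
  using assms lin_scale[OF linX] lin_scale[OF linY] lin_scale[OF linH] lin_scale[OF lin_pow[OF linX]]
    lin_scale[OF lin_pow[OF linY]] lin_scale[OF lin_pow[OF linH]]
  by simp_all

lemma gen_additive:
  assumes "u \<in> V" "v \<in> V"
  shows "X (u + v) = X u + X v" "Y (u + v) = Y u + Y v" "H (u + v) = H u + H v"
    "X (u - v) = X u - X v" "Y (u - v) = Y u - Y v" "H (u - v) = H u - H v"
  using assms lin_add[OF linX] lin_add[OF linY] lin_add[OF linH]
    lin_diff[OF subV linX] lin_diff[OF subV linY] lin_diff[OF subV linH]
  by simp_all

definition central :: "('v \<Rightarrow> 'v) \<Rightarrow> bool" where
  "central z \<longleftrightarrow> lin_op_on sc V z
     \<and> (\<forall>v\<in>V. z (X v) = X (z v) \<and> z (Y v) = Y (z v) \<and> z (H v) = H (z v))"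

lemma central_shift:
  assumes z: "central z"
  shows "central (\<lambda>v. z v - \<mu> *s v)"
proof -
  have lz: "lin_op_on sc V z" using z unfolding central_def by blast
  have "X (z v - \<mu> *s v) = z (X v) - \<mu> *s X v" "Y (z v - \<mu> *s v) = z (Y v) - \<mu> *s Y v"
    "H (z v - \<mu> *s v) = z (H v) - \<mu> *s H v" if v: "v \<in> V" for v
    using z v gen_additive(4-6)[OF lin_in[OF lz v] in_V(7)[OF v]] gen_homogeneous(1-3)[OF v]
    unfolding central_def by simp_all
  then show ?thesis using lin_shift[OF subV lz] unfolding central_def by simp
qed

text \<open>The kernel of a central operator is a submodule, so it is \<open>0\<close> or all of \<open>V\<close>.\<close>

lemma central_kernel:
  assumes z: "central z" and u: "u \<in> V" "u \<noteq> 0" "z u = 0"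
  shows "\<forall>v\<in>V. z v = 0"
proof -
  have lz: "lin_op_on sc V z" using z unfolding central_def by blast
  have "{v\<in>V. z v = 0} = V"
  proof (rule invariant_subspace_eq)
    show "subspace {v\<in>V. z v = 0}"
      using subV lin_zero[OF subV lz] lin_add[OF lz] lin_scale[OF lz]
      by (intro subspaceI) (auto intro: subspace_0 subspace_add subspace_scale)
    show "X x \<in> {v\<in>V. z v = 0} \<and> Y x \<in> {v\<in>V. z v = 0} \<and> H x \<in> {v\<in>V. z v = 0}"
      if "x \<in> {v\<in>V. z v = 0}" for x
      using that z in_V lin_zero[OF subV linX] lin_zero[OF subV linY] lin_zero[OF subV linH]
      unfolding central_def by auto
  qed (use u in auto)
  then show ?thesis by blast
qed

text \<open>The image of a central operator is a submodule; if the operator is injective the image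
  is nonzero, hence everything.\<close>

lemma central_image:
  assumes z: "central z" and z_inj: "\<And>u. u \<in> V \<Longrightarrow> z u = 0 \<Longrightarrow> u = 0"
  shows "z ` V = V"
proof -
  have lz: "lin_op_on sc V z" using z unfolding central_def by blast
  obtain v0 where v0: "v0 \<in> V" "v0 \<noteq> 0" using V_nonzero by blast
  show ?thesis
  proof (rule invariant_subspace_eq)
    show "z ` V \<subseteq> V" using lin_in[OF lz] by blast
    show "subspace (z ` V)"
    proof (rule subspaceI)
      show "0 \<in> z ` V" using lin_zero[OF subV lz] subspace_0[OF subV] by force
      show "x + y \<in> z ` V" if xy: "x \<in> z ` V" "y \<in> z ` V" for x y
      proof -
        obtain a b where "a \<in> V" "b \<in> V" "x = z a" "y = z b" using xy by blast
        then show ?thesis using lin_add[OF lz] subspace_add[OF subV] by (metis image_eqI)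
      qed
      show "c *s x \<in> z ` V" if x: "x \<in> z ` V" for c x
      proof -
        obtain a where "a \<in> V" "x = z a" using x by blast
        then show ?thesis using lin_scale[OF lz] in_V(7) by (metis image_eqI)
      qed
    qed
    show "X x \<in> z ` V \<and> Y x \<in> z ` V \<and> H x \<in> z ` V" if x: "x \<in> z ` V" for x
    proof -
      obtain a where "a \<in> V" "x = z a" using x by blast
      then show ?thesis using z in_V unfolding central_def by (metis image_eqI)
    qed
    show "z v0 \<in> z ` V" "z v0 \<noteq> 0" using v0 z_inj by auto
  qed
qed

text \<open>A set \<open>B \<subseteq> V\<close> containing a nonzero vector whose images under \<open>X, Y, H\<close> lie in its
  span spans \<open>V\<close>, since that span is a nonzero submodule.\<close>

lemma spanned_by_closed_set:
  assumes B: "B \<subseteq> V" "u \<in> B" "u \<noteq> 0"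
    and cl: "\<And>b. b \<in> B \<Longrightarrow> X b \<in> span B \<and> Y b \<in> span B \<and> H b \<in> span B"
  shows "span B = V"
proof -
  have op_span: "T x \<in> span B"
    if T: "lin_op_on sc V T" and TB: "\<And>b. b \<in> B \<Longrightarrow> T b \<in> span B" and x: "x \<in> span B" for T x
  proof -
    have "x \<in> V \<and> T x \<in> span B"
      using x
    proof (induction rule: span_induct_alt)
      case base
      then show ?case using subspace_0[OF subV] lin_zero[OF subV T] span_zero by auto
    next
      case (step c b y)
      then have "b \<in> V" using B by blast
      then show ?case
        using step TB lin_add[OF T in_V(7)] lin_scale[OF T] subspace_add[OF subV] in_V(7)
        by (auto intro: span_add span_scale)
    qed
    then show ?thesis by blast
  qed
  show ?thesis
  proof (rule invariant_subspace_eq)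
    show "span B \<subseteq> V" using span_minimal[OF B(1) subV] .
    show "X x \<in> span B \<and> Y x \<in> span B \<and> H x \<in> span B" if "x \<in> span B" for x
      using op_span[OF linX] op_span[OF linY] op_span[OF linH] cl that by blast
  qed (use B span_base in auto)
qed

lemma countably_spanned: "\<exists>S. countable S \<and> V \<subseteq> span S"
proof -
  obtain v0 where v0: "v0 \<in> V" "v0 \<noteq> 0" using V_nonzero by blast
  define S where "S = (\<lambda>fs. foldr (\<circ>) fs id v0) ` lists {X, Y, H}"
  have SV: "foldr (\<circ>) fs id v0 \<in> V" if "fs \<in> lists {X, Y, H}" for fs
    using that by (induction fs) (auto simp: v0 in_V)
  have "countable S" unfolding S_def by simp
  moreover have "span S = V"
  proof (rule spanned_by_closed_set)
    show "S \<subseteq> V" using SV unfolding S_def by blast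
    show "v0 \<in> S" unfolding S_def by (rule image_eqI[of _ _ "[]"]) auto
    show "X b \<in> span S \<and> Y b \<in> span S \<and> H b \<in> span S" if "b \<in> S" for b
    proof -
      obtain fs where fs: "fs \<in> lists {X, Y, H}" "b = foldr (\<circ>) fs id v0"
        using \<open>b \<in> S\<close> unfolding S_def by blast
      have "T b \<in> S" if "T \<in> {X, Y, H}" for T
        unfolding S_def using fs that by (intro image_eqI[of _ _ "T # fs"]) auto
      then show ?thesis by (auto intro: span_base)
    qed
  qed (use v0 in auto)
  ultimately show ?thesis by blast
qed

text \<open>If it has an eigenvalue \<open>\<mu>\<close>, the kernel of \<open>z - \<mu>\<close> is
  everything; otherwise every \<open>z - \<mu>\<close> is bijective, which the uncountability of \<open>\<complex>\<close>
  forbids.\<close>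

lemma central_scalar:
  assumes z: "central z"
  shows "\<exists>\<mu>. \<forall>v\<in>V. z v = \<mu> *s v"
proof (cases "\<exists>\<mu> u. u \<in> V \<and> u \<noteq> 0 \<and> z u = \<mu> *s u")
  case True
  then obtain \<mu> u where "u \<in> V" "u \<noteq> 0" "z u - \<mu> *s u = 0" by auto
  then have "\<forall>v\<in>V. z v - \<mu> *s v = 0" by (rule central_kernel[OF central_shift[OF z]])
  then show ?thesis by auto
next
  case False
  then have noeig: "\<And>\<mu> u. u \<in> V \<Longrightarrow> z u = \<mu> *s u \<Longrightarrow> u = 0" by blast
  obtain v0 where v0: "v0 \<in> V" "v0 \<noteq> 0" using V_nonzero by blast
  have hit: "\<exists>u\<in>V. z u - \<mu> *s u = v0" for \<mu>
  proof -
    have "(\<lambda>v. z v - \<mu> *s v) ` V = V"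
      by (rule central_image[OF central_shift[OF z]]) (metis eq_iff_diff_eq_0 noeig)
    then have "v0 \<in> (\<lambda>v. z v - \<mu> *s v) ` V" using v0(1) by simp
    then show ?thesis by blast
  qed
  obtain S where S: "countable S" "V \<subseteq> span S" using countably_spanned by blast
  have lz: "lin_op_on sc V z" using z unfolding central_def by blast
  have False by (rule no_resolvent_family[OF S subV lz v0 _ hit]) (metis noeig)
  then show ?thesis ..
qed

lemma w_pow_n: "w ^ n = 1"
  using prim unfolding primitive_root_of_unity_def by blast

lemma w_pow_ne_1: "0 < k \<Longrightarrow> k < n \<Longrightarrow> w ^ k \<noteq> 1"
  using prim unfolding primitive_root_of_unity_def by blast

lemma w_nonzero: "w \<noteq> 0"
  using w_pow_n n_gt1 by (cases n) auto

lemma w_pow_inj: "i < n \<Longrightarrow> j < n \<Longrightarrow> w ^ i = w ^ j \<Longrightarrow> i = j"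
proof -
  have "w ^ a \<noteq> w ^ b" if "a < b" "b < n" for a b
  proof
    assume "w ^ a = w ^ b"
    moreover have "w ^ b = w ^ a * w ^ (b - a)" using that by (simp flip: power_add)
    ultimately have "w ^ (b - a) = 1" using w_nonzero by simp
    then show False using w_pow_ne_1[of "b - a"] that by simp
  qed
  then show "i < n \<Longrightarrow> j < n \<Longrightarrow> w ^ i = w ^ j \<Longrightarrow> i = j"
    using linorder_neqE_nat by metis
qed

lemma w_inverse_pow:
  assumes "i \<le> n"
  shows "inverse w ^ (n - i) = w ^ i"
proof -
  have "w ^ i * w ^ (n - i) = 1" using assms w_pow_n by (simp flip: power_add)
  then show ?thesis using w_nonzero by (simp add: power_inverse field_simps)
qed

lemma H_Xpow: "v \<in> V \<Longrightarrow> H ((X ^^ k) v) = w ^ k *s (X ^^ k) (H v)"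
  by (induction k) (simp_all add: hx_rel in_V gen_homogeneous)

lemma H_Ypow: "v \<in> V \<Longrightarrow> H ((Y ^^ k) v) = inverse w ^ k *s (Y ^^ k) (H v)"
proof (induction k)
  case (Suc k)
  have "H (Y u) = inverse w *s Y (H u)" if "u \<in> V" for u
    using yh_rel[OF that] w_nonzero by simp
  then show ?case using Suc by (simp add: in_V gen_homogeneous)
qed simp

lemma Hpow_X: "v \<in> V \<Longrightarrow> (H ^^ k) (X v) = w ^ k *s X ((H ^^ k) v)"
  by (induction k) (simp_all add: hx_rel in_V gen_homogeneous)

lemma Y_Hpow: "v \<in> V \<Longrightarrow> Y ((H ^^ k) v) = w ^ k *s (H ^^ k) (Y v)"
  by (induction k) (simp_all add: yh_rel in_V gen_homogeneous)

lemma eigen_Xpow: "v \<in> V \<Longrightarrow> H v = l *s v \<Longrightarrow> H ((X ^^ k) v) = (w ^ k * l) *s (X ^^ k) v"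
  by (simp add: H_Xpow gen_homogeneous)

lemma eigen_Ypow: "v \<in> V \<Longrightarrow> H v = l *s v \<Longrightarrow> H ((Y ^^ k) v) = (inverse w ^ k * l) *s (Y ^^ k) v"
  by (simp add: H_Ypow gen_homogeneous)

text \<open>Iterating \<open>yx - xy = (w - 1)h\<close>: moving \<open>y\<close> past \<open>x\<^sup>k\<^sup>+\<^sup>1\<close> (and \<open>x\<close> past \<open>y\<^sup>k\<^sup>+\<^sup>1\<close>)
  produces a correction term through \<open>h\<close>, which vanishes for \<open>k + 1 = n\<close>.\<close>

lemma Y_Xpow:
  "u \<in> V \<Longrightarrow> Y ((X ^^ Suc k) u) = (X ^^ Suc k) (Y u) + (w ^ Suc k - 1) *s (X ^^ k) (H u)"
proof (induction k)
  case 0 then show ?case using yx_rel[of u] by (simp add: algebra_simps)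
next
  case (Suc k)
  let ?c = "w ^ Suc k - 1" and ?A = "(X ^^ Suc k) (Y u)" and ?B = "(X ^^ k) (H u)"
  have V: "?A \<in> V" "?B \<in> V" "(X ^^ Suc k) u \<in> V" using Suc.prems by (simp_all add: in_V)
  have IH: "X (Y ((X ^^ Suc k) u)) = X ?A + ?c *s X ?B"
    unfolding Suc.IH[OF Suc.prems]
    using gen_additive(1)[OF V(1) in_V(7)[OF V(2)]] gen_homogeneous(1)[OF V(2)] by simp
  have HX: "H ((X ^^ Suc k) u) = w ^ Suc k *s X ?B"
    using H_Xpow[OF Suc.prems, of "Suc k"] by simp
  have "Y ((X ^^ Suc (Suc k)) u) = X (Y ((X ^^ Suc k) u)) + (w - 1) *s H ((X ^^ Suc k) u)"
    using yx_rel[OF V(3)] by (simp add: algebra_simps)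
  also have "\<dots> = X ?A + (?c + (w - 1) * w ^ Suc k) *s X ?B"
    unfolding IH HX by (simp add: scale_left_distrib add.assoc)
  also have "?c + (w - 1) * w ^ Suc k = w ^ Suc (Suc k) - 1"
    by (simp add: algebra_simps)
  finally show ?case by simp
qed

lemma X_Ypow:
  "u \<in> V \<Longrightarrow> X ((Y ^^ Suc k) u) = (Y ^^ Suc k) (X u) + (w * inverse w ^ Suc k - w) *s (Y ^^ k) (H u)"
proof (induction k)
  case 0 then show ?case using yx_rel[of u] w_nonzero by (simp add: algebra_simps)
next
  case (Suc k)
  let ?c = "w * inverse w ^ Suc k - w" and ?A = "(Y ^^ Suc k) (X u)" and ?B = "(Y ^^ k) (H u)"
  have V: "?A \<in> V" "?B \<in> V" "(Y ^^ Suc k) u \<in> V" using Suc.prems by (simp_all add: in_V)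
  have IH: "Y (X ((Y ^^ Suc k) u)) = Y ?A + ?c *s Y ?B"
    unfolding Suc.IH[OF Suc.prems]
    using gen_additive(2)[OF V(1) in_V(7)[OF V(2)]] gen_homogeneous(2)[OF V(2)] by simp
  have HY: "H ((Y ^^ Suc k) u) = inverse w ^ Suc k *s Y ?B"
    using H_Ypow[OF Suc.prems, of "Suc k"] by simp
  have "X ((Y ^^ Suc (Suc k)) u) = Y (X ((Y ^^ Suc k) u)) - (w - 1) *s H ((Y ^^ Suc k) u)"
    using yx_rel[OF V(3)] by (simp add: algebra_simps)
  also have "\<dots> = Y ?A + (?c - (w - 1) * inverse w ^ Suc k) *s Y ?B"
    unfolding IH HY by (simp add: scale_left_diff_distrib)
  also have "?c - (w - 1) * inverse w ^ Suc k = w * inverse w ^ Suc (Suc k) - w"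
    using w_nonzero by (simp add: field_simps)
  finally show ?case by simp
qed

text \<open>Since \<open>w\<^sup>n = 1\<close>, the powers \<open>h\<^sup>n\<close>, \<open>x\<^sup>n\<close>, \<open>y\<^sup>n\<close> are central, and so is the
  Casimir element \<open>xy - h\<close>; by Schur's lemma all four act as scalars.\<close>

definition casimir :: "'v \<Rightarrow> 'v" where
  "casimir v = X (Y v) - H v"

lemma central_Hpow: "central (H ^^ n)"
  unfolding central_def
  using lin_pow[OF linH] Hpow_X[of _ n] Y_Hpow[of _ n] w_pow_n funpow_swap1[of H n]
  by simp

lemma central_Xpow: "central (X ^^ n)"
proof -
  obtain m where m: "n = Suc m" using n_gt1 by (cases n) auto
  have "Y ((X ^^ n) v) = (X ^^ n) (Y v)" if "v \<in> V" for v
    using Y_Xpow[OF that, of m] w_pow_n m by simp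
  then show ?thesis
    unfolding central_def using lin_pow[OF linX] H_Xpow[of _ n] w_pow_n funpow_swap1[of X n]
    by simp
qed

lemma central_Ypow: "central (Y ^^ n)"
proof -
  obtain m where m: "n = Suc m" using n_gt1 by (cases n) auto
  have w: "inverse w ^ n = 1" using w_pow_n by (simp add: power_inverse)
  have "X ((Y ^^ n) v) = (Y ^^ n) (X v)" if "v \<in> V" for v
    using X_Ypow[OF that, of m] w m by simp
  then show ?thesis
    unfolding central_def using lin_pow[OF linY] H_Ypow[of _ n] w funpow_swap1[of Y n]
    by simp
qed

lemma central_casimir: "central casimir"
  unfolding central_def
proof (intro conjI ballI)
  show "lin_op_on sc V casimir"
    unfolding lin_op_on_def casimir_def
    by (auto simp: in_V diff_in_V add_in_V gen_additive gen_homogeneous scale_right_diff_distrib)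
next
  fix v assume v: "v \<in> V"
  have yx: "Y (X u) = X (Y u) + (w - 1) *s H u" if "u \<in> V" for u
    using yx_rel[OF that] by (simp add: algebra_simps)
  have "casimir (X v) = X (Y (X v)) - X (w *s H v)"
    unfolding casimir_def using hx_rel[OF v] by simp
  also have "\<dots> = X (casimir v)"
    unfolding casimir_def yx[OF v] using v
    by (simp add: in_V add_in_V gen_additive gen_homogeneous algebra_simps)
  finally show "casimir (X v) = X (casimir v)" .
  have "Y (casimir v) = X (Y (Y v)) + (w - 1) *s H (Y v) - w *s H (Y v)"
    unfolding casimir_def using v yx[of "Y v"] yh_rel[OF v] by (simp add: in_V gen_additive)
  then show "casimir (Y v) = Y (casimir v)"
    unfolding casimir_def by (simp add: algebra_simps)
  have "H (casimir v) = X (w *s H (Y v)) - H (H v)"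
    unfolding casimir_def using v hx_rel[of "Y v"] by (simp add: in_V gen_additive)
  then show "casimir (H v) = H (casimir v)"
    unfolding casimir_def using yh_rel[OF v] by simp
qed

lemma XY_casimir: "\<forall>v\<in>V. casimir v = \<gamma> *s v \<Longrightarrow> u \<in> V \<Longrightarrow> X (Y u) = \<gamma> *s u + H u"
  unfolding casimir_def by (metis diff_add_cancel add.commute)

lemma YX_casimir: "\<forall>v\<in>V. casimir v = \<gamma> *s v \<Longrightarrow> u \<in> V \<Longrightarrow> Y (X u) = \<gamma> *s u + w *s H u"
  using yx_rel[of u] XY_casimir[of \<gamma> u] by (simp add: algebra_simps)

text \<open>\<open>H\<close> has an eigenvector: \<open>H\<^sup>n\<close> is a scalar \<open>\<beta>\<close>, so the nonzero polynomial \<open>t\<^sup>n - \<beta>\<close>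
  kills \<open>V\<close> when evaluated at \<open>H\<close>, which is impossible for an operator without eigenvectors.\<close>

lemma H_eigenvector: "\<exists>v l. v \<in> V \<and> v \<noteq> 0 \<and> H v = l *s v"
proof (rule ccontr)
  assume "\<not> ?thesis"
  then have noeig: "\<And>l u. u \<in> V \<Longrightarrow> H u = l *s u \<Longrightarrow> u = 0" by blast
  obtain \<beta> where \<beta>: "\<forall>v\<in>V. (H ^^ n) v = \<beta> *s v" using central_scalar[OF central_Hpow] by blast
  obtain v0 where v0: "v0 \<in> V" "v0 \<noteq> 0" using V_nonzero by blast
  let ?p = "monom 1 n + [:- \<beta>:]"
  have "coeff [:- \<beta>:] n = 0" using n_gt1 by (cases n) auto
  then have "coeff ?p n = 1" by simp
  then have p0: "?p \<noteq> 0" by (metis coeff_0 zero_neq_one)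
  have "op_poly sc ?p H v0 = (H ^^ n) v0 - \<beta> *s v0"
    using op_poly_add[of "monom 1 n" "[:- \<beta>:]" H v0] op_poly_monom[OF subV linH v0(1)]
      op_poly_const[of "- \<beta>" H v0] by simp
  then have "op_poly sc ?p H v0 = 0" using \<beta> v0 by simp
  then show False using op_poly_inj[OF subV linH, of ?p v0] noeig p0 v0 by blast
qed

text \<open>For an \<open>H\<close>-eigenvector \<open>v\<close>, the vectors \<open>x\<^sup>i v\<close> and \<open>y\<^sup>i v\<close> with \<open>i < n\<close> span a
  submodule, hence all of \<open>V\<close>.\<close>

definition chain_set :: "'v \<Rightarrow> 'v set" where
  "chain_set v = (\<lambda>i. (X ^^ i) v) ` {..<n} \<union> (\<lambda>i. (Y ^^ i) v) ` {..<n}"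

lemma chain_set_span:
  assumes "i < n"
  shows "(X ^^ i) v \<in> span (chain_set v)" "(Y ^^ i) v \<in> span (chain_set v)"
  using assms unfolding chain_set_def by (auto intro: span_base)

text \<open>The three generators map each chain vector into the span of the chains: \<open>h\<close> acts
  diagonally, \<open>x\<close> (resp. \<open>y\<close>) moves along its chain and wraps around through the scalar
  \<open>x\<^sup>n\<close> (resp. \<open>y\<^sup>n\<close>), and the other generator steps back through the Casimir scalar.\<close>

lemma X_chain_closed:
  assumes v: "v \<in> V" "H v = l *s v" and \<alpha>: "\<forall>u\<in>V. (X ^^ n) u = \<alpha> *s u"
    and \<gamma>: "\<forall>u\<in>V. casimir u = \<gamma> *s u" and i: "i < n"
  shows "X ((X ^^ i) v) \<in> span (chain_set v) \<and> Y ((X ^^ i) v) \<in> span (chain_set v)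
    \<and> H ((X ^^ i) v) \<in> span (chain_set v)"
proof (intro conjI)
  show "H ((X ^^ i) v) \<in> span (chain_set v)"
    using eigen_Xpow[OF v] chain_set_span[OF i] by (simp add: span_scale)
  show "X ((X ^^ i) v) \<in> span (chain_set v)"
  proof (cases "Suc i < n")
    case True
    then show ?thesis using chain_set_span(1)[of "Suc i"] by simp
  next
    case False
    then have "Suc i = n" using i by simp
    then have "X ((X ^^ i) v) = \<alpha> *s (X ^^ 0) v" using \<alpha> v by (metis funpow_0 funpow.simps(2) comp_apply)
    then show ?thesis using chain_set_span(1)[of 0] n_gt1 by (simp add: span_scale)
  qed
  show "Y ((X ^^ i) v) \<in> span (chain_set v)"
  proof (cases i)
    case 0
    then show ?thesis using chain_set_span(2)[of 1] n_gt1 by simp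
  next
    case (Suc j)
    have "Y ((X ^^ i) v) = (\<gamma> + w * (w ^ j * l)) *s (X ^^ j) v"
      using Suc YX_casimir[OF \<gamma>, of "(X ^^ j) v"] eigen_Xpow[OF v, of j] v
      by (simp add: in_V scale_left_distrib)
    then show ?thesis using chain_set_span(1)[of j] i Suc by (simp add: span_scale)
  qed
qed

lemma Y_chain_closed:
  assumes v: "v \<in> V" "H v = l *s v" and \<alpha>: "\<forall>u\<in>V. (Y ^^ n) u = \<alpha> *s u"
    and \<gamma>: "\<forall>u\<in>V. casimir u = \<gamma> *s u" and i: "i < n"
  shows "X ((Y ^^ i) v) \<in> span (chain_set v) \<and> Y ((Y ^^ i) v) \<in> span (chain_set v)
    \<and> H ((Y ^^ i) v) \<in> span (chain_set v)"
proof (intro conjI)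
  show "H ((Y ^^ i) v) \<in> span (chain_set v)"
    using eigen_Ypow[OF v] chain_set_span[OF i] by (simp add: span_scale)
  show "Y ((Y ^^ i) v) \<in> span (chain_set v)"
  proof (cases "Suc i < n")
    case True
    then show ?thesis using chain_set_span(2)[of "Suc i"] by simp
  next
    case False
    then have "Suc i = n" using i by simp
    then have "Y ((Y ^^ i) v) = \<alpha> *s (Y ^^ 0) v" using \<alpha> v by (metis funpow_0 funpow.simps(2) comp_apply)
    then show ?thesis using chain_set_span(2)[of 0] n_gt1 by (simp add: span_scale)
  qed
  show "X ((Y ^^ i) v) \<in> span (chain_set v)"
  proof (cases i)
    case 0
    then show ?thesis using chain_set_span(1)[of 1] n_gt1 by simp
  next
    case (Suc j)
    have "X ((Y ^^ i) v) = (\<gamma> + inverse w ^ j * l) *s (Y ^^ j) v"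
      using Suc XY_casimir[OF \<gamma>, of "(Y ^^ j) v"] eigen_Ypow[OF v, of j] v
      by (simp add: in_V scale_left_distrib)
    then show ?thesis using chain_set_span(2)[of j] i Suc by (simp add: span_scale)
  qed
qed

theorem finite_dimensional: "fin_dim sc V"
proof -
  obtain v l where v: "v \<in> V" "v \<noteq> 0" "H v = l *s v" using H_eigenvector by blast
  obtain \<alpha> where \<alpha>: "\<forall>u\<in>V. (X ^^ n) u = \<alpha> *s u" using central_scalar[OF central_Xpow] by blast
  obtain \<alpha>' where \<alpha>': "\<forall>u\<in>V. (Y ^^ n) u = \<alpha>' *s u" using central_scalar[OF central_Ypow] by blast
  obtain \<gamma> where \<gamma>: "\<forall>u\<in>V. casimir u = \<gamma> *s u" using central_scalar[OF central_casimir] by blast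
  have "span (chain_set v) = V"
  proof (rule spanned_by_closed_set)
    show "chain_set v \<subseteq> V" unfolding chain_set_def using v(1) in_V by blast
    show "v \<in> chain_set v" unfolding chain_set_def using n_gt1 by (auto intro: image_eqI[of _ _ 0])
    show "X b \<in> span (chain_set v) \<and> Y b \<in> span (chain_set v) \<and> H b \<in> span (chain_set v)"
      if "b \<in> chain_set v" for b
      using that X_chain_closed[OF v(1,3) \<alpha> \<gamma>] Y_chain_closed[OF v(1,3) \<alpha>' \<gamma>]
      unfolding chain_set_def by blast
  qed (rule v(2))
  moreover have "finite (chain_set v)" unfolding chain_set_def by simp
  ultimately show ?thesis unfolding fin_dim_def using v(1) in_V by (metis span_superset)
qed

end

section \<open>Classification in the case \<open>f = wh\<close>\<close>

lemma lin_ext_degree: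
  assumes "0 < m" and "\<And>i. i < m \<Longrightarrow> degree (g i) < m"
  shows "degree (lin_ext m g p) < m"
proof (cases m)
  case (Suc k)
  have "degree (lin_ext m g p) \<le> k"
    unfolding lin_ext_def using assms(2) Suc
    by (intro degree_sum_le) (auto intro: order.trans[OF degree_smult_le] simp: less_Suc_eq_le)
  then show ?thesis using Suc by simp
qed (use assms in simp)

lemma qpow_nat: "i < n \<Longrightarrow> qpow n a (int i) = monom 1 i"
  unfolding qpow_def by (simp add: zdiv_int zmod_int)

lemma qpow_up:
  assumes "i < n"
  shows "qpow n a (int i + 1) = (if Suc i < n then monom 1 (Suc i) else smult a (monom 1 0))"
proof (cases "Suc i < n")
  case True
  then show ?thesis using qpow_nat[of "Suc i" n a] by (simp add: add.commute)
next
  case False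
  then have "int i + 1 = int n" using assms by simp
  then show ?thesis using False assms unfolding qpow_def \<open>int i + 1 = int n\<close> by simp
qed

lemma qpow_down:
  assumes "i < n"
  shows "qpow n a (int i - 1) = (if i = 0 then smult (inverse a) (monom 1 (n - 1)) else monom 1 (i - 1))"
proof (cases "i = 0")
  case True
  have "(-1::int) div int n = -1" "(-1::int) mod int n = int n - 1"
    using assms by (simp_all add: div_eq_minus1 zmod_minus1)
  then show ?thesis
    using True assms unfolding qpow_def by (simp add: nat_diff_distrib power_int_minus)
next
  case False
  then show ?thesis using qpow_nat[of "i - 1" n a] assms by (simp add: of_nat_diff)
qed

lemma degree_smult_monom: "k < n \<Longrightarrow> degree (smult c (monom (1::complex) k)) < n"
  by (meson degree_monom_le degree_smult_le le_less_trans order_trans)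

lemma degree_smult_qpow:
  assumes "0 < n"
  shows "degree (smult c (qpow n a k)) < n"
proof -
  have "nat (k mod int n) < n" using assms by (simp add: nat_less_iff)
  then have "degree (qpow n a k) < n" unfolding qpow_def by (rule degree_smult_monom)
  then show ?thesis using degree_smult_le le_less_trans by blast
qed

lemma funpow_last_nonzero:
  fixes T :: "'a::zero \<Rightarrow> 'a"
  assumes "v \<noteq> 0" "(T ^^ k) v = 0"
  shows "\<exists>j<k. (T ^^ j) v \<noteq> 0 \<and> T ((T ^^ j) v) = 0"
  using assms(2)
proof (induction k)
  case 0 then show ?case using assms(1) by simp
next
  case (Suc k)
  then show ?case by (cases "(T ^^ k) v = 0") (auto intro: less_SucI)
qed

context simple_wh_module
begin

text \<open>An isomorphism from a model module: if \<open>e\<^sub>0 \<noteq> 0, \<dots>, e\<^sub>m\<^sub>-\<^sub>1\<close> are independent and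
  the actions of \<open>X, Y, H\<close> on them are given by the model's matrices, the coordinate map is an
  isomorphism; its image is a nonzero submodule, so it is onto by simplicity.\<close>

lemma iso_from_basis:
  assumes e: "\<And>i. i < m \<Longrightarrow> e i \<in> V" "0 < m" "e 0 \<noteq> 0"
    and indep: "\<And>c. (\<Sum>i<m. c i *s e i) = 0 \<Longrightarrow> \<forall>i<m. c i = 0"
    and deg: "\<And>i. i < m \<Longrightarrow> degree (gX i) < m \<and> degree (gY i) < m \<and> degree (gH i) < m"
    and gX: "\<And>i. i < m \<Longrightarrow> coord m e (gX i) = X (e i)"
    and gY: "\<And>i. i < m \<Longrightarrow> coord m e (gY i) = Y (e i)"
    and gH: "\<And>i. i < m \<Longrightarrow> coord m e (gH i) = H (e i)"
  shows "H_iso smult (polys_below m) (lin_ext m gX) (lin_ext m gY) (lin_ext m gH) sc V X Y H"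
proof -
  let ?f = "coord m e" and ?P = "polys_below m"
  note intertwine = coord_lin_ext[OF subV linX e(1) gX] coord_lin_ext[OF subV linY e(1) gY]
    coord_lin_ext[OF subV linH e(1) gH]
  have closedP: "lin_ext m g p \<in> ?P" if "\<And>i. i < m \<Longrightarrow> degree (g i) < m" for g p
    unfolding polys_below_def using lin_ext_degree[OF e(2) that] by simp
  have "?f ` ?P = V"
  proof (rule invariant_subspace_eq)
    have "coord m e p \<in> V" for p by (rule coord_in[OF subV]) (rule e(1))
    then show "?f ` ?P \<subseteq> V" by blast
    show "subspace (?f ` ?P)" by (rule coord_image_subspace[OF e(2)])
    show "?f (monom 1 0) \<in> ?f ` ?P" using e(2) unfolding polys_below_def by simp
    show "?f (monom 1 0) \<noteq> 0" using coord_monom[OF e(2), of e 1] e(3) by (simp add: one_pCons)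
    show "X x \<in> ?f ` ?P \<and> Y x \<in> ?f ` ?P \<and> H x \<in> ?f ` ?P" if x: "x \<in> ?f ` ?P" for x
    proof -
      obtain p where p: "x = ?f p" using x by blast
      have "lin_ext m gX p \<in> ?P" "lin_ext m gY p \<in> ?P" "lin_ext m gH p \<in> ?P"
        by (rule closedP, use deg in blast)+
      moreover have "X x = ?f (lin_ext m gX p)" "Y x = ?f (lin_ext m gY p)" "H x = ?f (lin_ext m gH p)"
        unfolding p by (simp_all only: intertwine)
      ultimately show ?thesis by blast
    qed
  qed
  then have "bij_betw ?f ?P V" using coord_inj[OF indep] by (simp add: bij_betw_def)
  then show ?thesis
    unfolding H_iso_def using coord_add coord_smult intertwine by blast
qed

lemma eigen_chain_independent:
  assumes e: "\<And>i. i < n \<Longrightarrow> e i \<in> V" "\<And>i. i < n \<Longrightarrow> e i \<noteq> 0"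
    and eig: "\<And>i. i < n \<Longrightarrow> H (e i) = (w ^ i * l) *s e i" and l: "l \<noteq> 0"
    and rel: "(\<Sum>i<n. c i *s e i) = 0"
  shows "\<forall>i<n. c i = 0"
proof (rule eigenvectors_independent[OF subV linH e eig _ rel])
  show "inj_on (\<lambda>i. w ^ i * l) {..<n}" using w_pow_inj l by (auto intro: inj_onI)
qed

text \<open>If \<open>x\<^sup>n\<close> acts by \<open>\<alpha> \<noteq> 0\<close>, then \<open>y\<close> maps an \<open>H\<close>-eigenvector \<open>v\<close> to a multiple of
  \<open>x\<^sup>n\<^sup>-\<^sup>1 v\<close>: indeed \<open>\<alpha> y v = x\<^sup>n\<^sup>-\<^sup>1 (xy) v\<close> and \<open>xy\<close> acts on \<open>v\<close> by \<open>l + \<gamma>\<close>.\<close>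

lemma Y_via_Xpow:
  assumes v: "v \<in> V" "H v = l *s v"
    and \<alpha>: "\<forall>u\<in>V. (X ^^ n) u = \<alpha> *s u" "\<alpha> \<noteq> 0"
    and \<gamma>: "\<forall>u\<in>V. casimir u = \<gamma> *s u"
  shows "Y v = ((l + \<gamma>) * inverse \<alpha>) *s (X ^^ (n - 1)) v"
proof -
  have "\<alpha> *s Y v = (X ^^ Suc (n - 1)) (Y v)" using \<alpha>(1) in_V(2)[OF v(1)] n_gt1 by simp
  also have "\<dots> = (X ^^ (n - 1)) ((l + \<gamma>) *s v)"
    using XY_casimir[OF \<gamma> v(1)] v(2) by (simp add: funpow_swap1 scale_left_distrib add.commute)
  also have "\<dots> = (l + \<gamma>) *s (X ^^ (n - 1)) v" by (rule gen_homogeneous(4)[OF v(1)])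
  finally have "inverse \<alpha> *s \<alpha> *s Y v = inverse \<alpha> *s (l + \<gamma>) *s (X ^^ (n - 1)) v" by simp
  then show ?thesis using \<alpha>(2) by (simp add: mult.commute)
qed

text \<open>If \<open>x\<^sup>n = 0\<close>, some \<open>x\<^sup>j v \<noteq> 0\<close> is killed by \<open>x\<close>; applying \<open>y\<close> and the Casimir
  relation then determines the Casimir scalar.\<close>

lemma X_killed_vector:
  assumes v: "v \<in> V" "v \<noteq> 0" "H v = l *s v" and X0: "\<forall>u\<in>V. (X ^^ n) u = 0"
    and \<gamma>: "\<forall>u\<in>V. casimir u = \<gamma> *s u"
  shows "\<exists>j. \<gamma> = - (l * w ^ Suc j)"
proof -
  obtain j where j: "(X ^^ j) v \<noteq> 0" "X ((X ^^ j) v) = 0"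
    using funpow_last_nonzero[OF v(2), where T=X and k=n] X0 v(1) by blast
  have "0 = Y (X ((X ^^ j) v))" using j(2) lin_zero[OF subV linY] by simp
  also have "\<dots> = (\<gamma> + l * w ^ Suc j) *s (X ^^ j) v"
    using YX_casimir[OF \<gamma> in_V(4)[OF v(1)]] eigen_Xpow[OF v(1,3)]
    by (simp add: scale_left_distrib algebra_simps)
  finally have "\<gamma> = - (l * w ^ Suc j)" using j(1) by (simp add: eq_neg_iff_add_eq_0)
  then show ?thesis ..
qed

text \<open>Dually, if \<open>y\<^sup>n = 0\<close>, some nonzero \<open>H\<close>-eigenvector \<open>u = y\<^sup>j v\<close> is killed by \<open>y\<close>, and
  the Casimir scalar is minus its eigenvalue.\<close>

lemma Y_killed_vector:
  assumes v: "v \<in> V" "v \<noteq> 0" "H v = l *s v" and l: "l \<noteq> 0" and Y0: "\<forall>u\<in>V. (Y ^^ n) u = 0"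
    and \<gamma>: "\<forall>u\<in>V. casimir u = \<gamma> *s u"
  shows "\<exists>u \<mu>. u \<in> V \<and> u \<noteq> 0 \<and> Y u = 0 \<and> H u = \<mu> *s u \<and> \<mu> \<noteq> 0 \<and> \<gamma> = - \<mu>"
proof -
  obtain j where j: "(Y ^^ j) v \<noteq> 0" "Y ((Y ^^ j) v) = 0"
    using funpow_last_nonzero[OF v(2), where T=Y and k=n] Y0 v(1) by blast
  define u where "u = (Y ^^ j) v"
  define \<mu> where "\<mu> = inverse w ^ j * l"
  have u: "u \<in> V" "u \<noteq> 0" "Y u = 0" "H u = \<mu> *s u"
    unfolding u_def \<mu>_def using j v(1) eigen_Ypow[OF v(1,3)] by (simp_all add: in_V)
  have "0 = X (Y u)" using u(3) lin_zero[OF subV linX] by simp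
  also have "\<dots> = (\<gamma> + \<mu>) *s u" using XY_casimir[OF \<gamma> u(1)] u(4) by (simp add: scale_left_distrib)
  finally have "\<gamma> = - \<mu>" using u(2) by (simp add: eq_neg_iff_add_eq_0)
  moreover have "\<mu> \<noteq> 0" unfolding \<mu>_def using l w_nonzero by simp
  ultimately show ?thesis using u by blast
qed

text \<open>(a): if \<open>H\<close> has a nonzero kernel, \<open>H = 0\<close>; then \<open>X\<close> and \<open>Y\<close> commute, are central,
  hence scalars, and \<open>V\<close> is one-dimensional.\<close>

lemma module_a:
  assumes v: "v \<in> V" "v \<noteq> 0" "H v = 0"
  shows "\<exists>a b. H_iso smult (polys_below 1) (modA_X a) (modA_Y b) modA_H sc V X Y H"
proof -
  have "{u\<in>V. H u = 0} = V"
  proof (rule invariant_subspace_eq)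
    show "subspace {u\<in>V. H u = 0}"
      using subspace_0[OF subV] lin_zero[OF subV linH]
      by (intro subspaceI) (auto simp: in_V add_in_V gen_additive gen_homogeneous)
    show "X x \<in> {u\<in>V. H u = 0} \<and> Y x \<in> {u\<in>V. H u = 0} \<and> H x \<in> {u\<in>V. H u = 0}"
      if "x \<in> {u\<in>V. H u = 0}" for x
      using that hx_rel yh_rel[of x] H_Ypow[of x 1] lin_zero[OF subV linX] lin_zero[OF subV linY]
        lin_zero[OF subV linH] subspace_0[OF subV]
      by (auto simp: in_V)
  qed (use v in auto)
  then have H0: "\<And>u. u \<in> V \<Longrightarrow> H u = 0" by blast
  then have XY: "X (Y u) = Y (X u)" if "u \<in> V" for u
    using yx_rel[OF that] H0[OF that] by simp
  obtain a where a: "\<forall>u\<in>V. X u = a *s u"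
    using central_scalar[of X] linX XY H0 in_V lin_zero[OF subV linX] unfolding central_def
    by auto
  obtain b where b: "\<forall>u\<in>V. Y u = b *s u"
    using central_scalar[of Y] linY XY H0 in_V lin_zero[OF subV linY] unfolding central_def
    by auto
  have "H_iso smult (polys_below 1) (lin_ext 1 (\<lambda>j. smult a (monom 1 0)))
      (lin_ext 1 (\<lambda>j. smult b (monom 1 0))) (lin_ext 1 (\<lambda>j. 0)) sc V X Y H"
  proof (rule iso_from_basis[where e="\<lambda>_. v"])
    show "\<forall>i<1. c i = 0" if "(\<Sum>i<1. c i *s v) = 0" for c :: "nat \<Rightarrow> complex"
      using that v by simp
    show "coord 1 (\<lambda>_. v) (smult a (monom 1 0)) = X v" "coord 1 (\<lambda>_. v) (smult b (monom 1 0)) = Y v"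
      using coord_monom[of 0 1 "\<lambda>_. v"] a b v by simp_all
    show "coord 1 (\<lambda>_. v) 0 = H v" using H0 v by (simp add: coord_def)
  qed (use v degree_smult_monom in auto)
  then show ?thesis unfolding modA_X_def modA_Y_def modA_H_def by blast
qed

text \<open>(b): \<open>x\<^sup>n\<close> acts by \<open>\<alpha> \<noteq> 0\<close>; the chain \<open>x\<^sup>i v\<close> (\<open>v\<close> an \<open>H\<close>-eigenvector) is a basis,
  \<open>x\<close> shifts it cyclically and \<open>y\<close> acts through the Casimir element.\<close>

lemma module_b:
  assumes v: "v \<in> V" "v \<noteq> 0" "H v = l *s v" and l: "l \<noteq> 0"
    and \<alpha>: "\<forall>u\<in>V. (X ^^ n) u = \<alpha> *s u" "\<alpha> \<noteq> 0"
    and \<gamma>: "\<forall>u\<in>V. casimir u = \<gamma> *s u"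
  shows "\<exists>a b z. a \<noteq> 0 \<and> b \<noteq> 0 \<and>
     H_iso smult (polys_below n) (modB_X n w a b) (modB_Y n w a b z) (modB_H n w a b) sc V X Y H"
proof -
  define e where "e i = (X ^^ i) v" for i
  have eV: "e i \<in> V" for i unfolding e_def using v(1) by (rule in_V)
  have enz: "e i \<noteq> 0" if "i < n" for i
    unfolding e_def using funpow_nonzero_below[OF subV linX v(1), of n i] \<alpha> v that by simp
  have eig: "H (e i) = (w ^ i * l) *s e i" for i unfolding e_def by (rule eigen_Xpow[OF v(1,3)])
  have "H_iso smult (polys_below n) (modB_X n w \<alpha> l) (modB_Y n w \<alpha> l \<gamma>) (modB_H n w \<alpha> l) sc V X Y H"
    unfolding modB_X_def modB_Y_def modB_H_def
  proof (rule iso_from_basis)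
    show "\<forall>i<n. c i = 0" if "(\<Sum>i<n. c i *s e i) = 0" for c
      by (rule eigen_chain_independent[OF eV enz eig l that])
    fix i assume i: "i < n"
    show "coord n e (smult (l * w ^ i) (qpow n \<alpha> (int i))) = H (e i)"
      using coord_monom[OF i] eig by (simp add: qpow_nat[OF i] mult.commute)
    show "coord n e (qpow n \<alpha> (int i + 1)) = X (e i)"
    proof (cases "Suc i < n")
      case True
      then show ?thesis using coord_monom1[OF True] by (simp add: qpow_up[OF i] e_def)
    next
      case False
      then have "Suc i = n" using i by simp
      then have "X (e i) = \<alpha> *s e 0" using \<alpha>(1) v(1) unfolding e_def by (metis funpow.simps funpow_0 o_apply)
      then show ?thesis using False coord_monom[of 0 n e \<alpha>] i by (simp add: qpow_up[OF i])
    qed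
    show "coord n e (smult (l * w ^ i + \<gamma>) (qpow n \<alpha> (int i - 1))) = Y (e i)"
    proof (cases i)
      case 0
      have "Y v = ((l + \<gamma>) * inverse \<alpha>) *s e (n - 1)"
        unfolding e_def by (rule Y_via_Xpow[OF v(1,3) \<alpha> \<gamma>])
      moreover have "qpow n \<alpha> (int i - 1) = smult (inverse \<alpha>) (monom 1 (n - 1))"
        using qpow_down[OF i] 0 by simp
      ultimately show ?thesis
        using 0 coord_monom[of "n - 1" n e] n_gt1 by (simp add: e_def mult.commute)
    next
      case (Suc j)
      have "Y (e i) = (\<gamma> + w * (w ^ j * l)) *s e j"
        using Suc YX_casimir[OF \<gamma> eV[of j]] eig[of j] by (simp add: e_def scale_left_distrib)
      moreover have "qpow n \<alpha> (int i - 1) = monom 1 j" using qpow_down[OF i] Suc by simp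
      ultimately show ?thesis
        using Suc coord_monom[of j n e "l * w ^ i + \<gamma>"] i by (simp add: algebra_simps)
    qed
  qed (use eV enz degree_smult_qpow degree_smult_qpow[of n 1] n_gt1 in auto)
  then show ?thesis using \<alpha>(2) l by blast
qed

text \<open>The Casimir scalar is \<open>-l w\<^sup>j\<^sup>+\<^sup>1\<close>;
  the basis is the chain \<open>\<alpha>\<inverse> y\<^sup>n\<^sup>-\<^sup>i v\<close>, on which \<open>y\<close> shifts down cyclically.\<close>

lemma module_c:
  assumes v: "v \<in> V" "v \<noteq> 0" "H v = l *s v" and l: "l \<noteq> 0"
    and X0: "\<forall>u\<in>V. (X ^^ n) u = 0"
    and \<alpha>: "\<forall>u\<in>V. (Y ^^ n) u = \<alpha> *s u" "\<alpha> \<noteq> 0"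
    and \<gamma>: "\<forall>u\<in>V. casimir u = \<gamma> *s u"
  shows "\<exists>a b j. a \<noteq> 0 \<and> b \<noteq> 0 \<and>
     H_iso smult (polys_below n) (modC_X n w a b j) (modC_Y n w a) (modC_H n w a b) sc V X Y H"
proof -
  obtain j where \<gamma>_val: "\<gamma> = - (l * w ^ Suc j)"
    using X_killed_vector[OF v X0 \<gamma>] by blast
  define A where "A = inverse \<alpha>"
  define e where "e i = A *s (Y ^^ (n - i)) v" for i
  have eV: "e i \<in> V" for i unfolding e_def using v(1) by (simp add: in_V)
  have e0: "e 0 = v" unfolding e_def A_def using \<alpha> v(1) by simp
  have enz: "e i \<noteq> 0" if "i < n" for i
    unfolding e_def A_def using funpow_nonzero_below[OF subV linY v(1), of n "n - i"] \<alpha> v by simp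
  have eig: "H (e i) = (w ^ i * l) *s e i" if "i \<le> n" for i
    unfolding e_def using eigen_Ypow[OF v(1,3), of "n - i"] w_inverse_pow[OF that] v(1)
    by (simp add: in_V gen_homogeneous mult.commute)
  have Ye: "Y (e (Suc i)) = e i" if "i < n" for i
  proof -
    have "n - i = Suc (n - Suc i)" using that by simp
    then show ?thesis unfolding e_def using v(1) by (simp add: in_V gen_homogeneous)
  qed
  have "H_iso smult (polys_below n) (modC_X n w A l (int (Suc j))) (modC_Y n w A) (modC_H n w A l)
      sc V X Y H"
    unfolding modC_X_def modC_Y_def modC_H_def
  proof (rule iso_from_basis)
    show "\<forall>i<n. c i = 0" if "(\<Sum>i<n. c i *s e i) = 0" for c
      using eigen_chain_independent[of e, OF _ enz _ l that] eV eig by simp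
    fix i assume i: "i < n"
    show "coord n e (smult (l * w ^ i) (qpow n A (int i))) = H (e i)"
      using coord_monom[OF i] eig[of i] i by (simp add: qpow_nat[OF i] mult.commute)
    show "coord n e (qpow n A (int i - 1)) = Y (e i)"
    proof (cases i)
      case 0
      have "qpow n A (int i - 1) = smult \<alpha> (monom 1 (n - 1))"
        using qpow_down[OF i] 0 unfolding A_def by simp
      moreover have "\<alpha> *s e (n - 1) = Y (e 0)"
        unfolding e_def A_def using \<alpha> n_gt1 v(1) by (simp add: in_V)
      ultimately show ?thesis using 0 coord_monom[of "n - 1" n e \<alpha>] n_gt1 by simp
    next
      case (Suc k)
      then show ?thesis
        using qpow_down[OF i] coord_monom1[of k n e] Ye[of k] i by simp
    qed
    have pj: "w powi (1 + int j) = w ^ Suc j" using power_int_of_nat[of w "Suc j"] by simp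
    show "coord n e (smult (l * (w ^ (i + 1) - w powi int (Suc j))) (qpow n A (int i + 1))) = X (e i)"
    proof (cases "Suc i < n")
      case True
      have "X (e i) = \<gamma> *s e (Suc i) + H (e (Suc i))"
        using XY_casimir[OF \<gamma> eV[of "Suc i"]] Ye[OF i] by simp
      also have "\<dots> = (l * (w ^ (i + 1) - w ^ Suc j)) *s e (Suc i)"
        using eig[of "Suc i"] True \<gamma>_val by (simp add: scale_left_distrib algebra_simps)
      finally show ?thesis
        using True coord_monom[OF True] by (simp add: qpow_up[OF i] pj)
    next
      case False
      then have n: "Suc i = n" using i by simp
      have "X (e i) = A *s X (Y v)"
        unfolding e_def using n v(1) by (simp add: in_V gen_homogeneous flip: n)
      also have "X (Y v) = (l * (1 - w ^ Suc j)) *s v"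
        using XY_casimir[OF \<gamma> v(1)] v(3) \<gamma>_val by (simp add: scale_left_distrib algebra_simps)
      also have "A *s (l * (1 - w ^ Suc j)) *s v = (l * (w ^ (i + 1) - w ^ Suc j) * A) *s e 0"
        using n w_pow_n e0 by (simp add: mult.commute)
      finally show ?thesis
        using False coord_monom[of 0 n e] i by (simp add: qpow_up[OF i] pj)
    qed
  qed (use eV enz degree_smult_qpow degree_smult_qpow[of n 1] n_gt1 in auto)
  then show ?thesis using \<alpha>(2) l unfolding A_def by (metis inverse_nonzero_iff_nonzero)
qed

text \<open>Starting from \<open>u \<noteq> 0\<close> with \<open>yu = 0\<close>, the chain \<open>x\<^sup>i u\<close>
  is a basis since \<open>y\<close> maps \<open>x\<^sup>i\<^sup>+\<^sup>1 u\<close> to a nonzero multiple of \<open>x\<^sup>i u\<close> for \<open>i + 1 < n\<close>.\<close>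

lemma module_d:
  assumes v: "v \<in> V" "v \<noteq> 0" "H v = l *s v" and l: "l \<noteq> 0"
    and X0: "\<forall>u\<in>V. (X ^^ n) u = 0" and Y0: "\<forall>u\<in>V. (Y ^^ n) u = 0"
    and \<gamma>: "\<forall>u\<in>V. casimir u = \<gamma> *s u"
  shows "\<exists>z. z \<noteq> 0 \<and> H_iso smult (polys_below n) (modD_X n) (modD_Y n w z) (modD_H n w z) sc V X Y H"
proof -
  obtain u \<mu> where u: "u \<in> V" "u \<noteq> 0" "Y u = 0" "H u = \<mu> *s u" and \<mu>0: "\<mu> \<noteq> 0"
    and \<gamma>_val: "\<gamma> = - \<mu>"
    using Y_killed_vector[OF v l Y0 \<gamma>] by blast
  define e where "e i = (X ^^ i) u" for i
  have eV: "e i \<in> V" for i unfolding e_def using u(1) by (rule in_V)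
  have eig: "H (e i) = (w ^ i * \<mu>) *s e i" for i unfolding e_def by (rule eigen_Xpow[OF u(1,4)])
  have Ye: "Y (e (Suc i)) = (\<mu> * (w ^ Suc i - 1)) *s e i" for i
    using YX_casimir[OF \<gamma> eV[of i]] eig[of i] \<gamma>_val
    by (simp add: e_def scale_left_distrib algebra_simps)
  have enz: "e i \<noteq> 0" if i: "i < n" for i
  proof
    assume "e i = 0"
    then obtain k where k: "k < i" "e k \<noteq> 0" "e (Suc k) = 0"
      using funpow_last_nonzero[OF u(2), where T=X and k=i] unfolding e_def by auto
    then have "(\<mu> * (w ^ Suc k - 1)) *s e k = 0" using Ye[of k] lin_zero[OF subV linY] by simp
    then have "w ^ Suc k = 1" using k(2) \<mu>0 by simp
    then show False using w_pow_ne_1[of "Suc k"] k(1) i by simp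
  qed
  have "H_iso smult (polys_below n) (modD_X n) (modD_Y n w (- \<mu>)) (modD_H n w (- \<mu>)) sc V X Y H"
    unfolding modD_X_def modD_Y_def modD_H_def
  proof (rule iso_from_basis)
    show "\<forall>i<n. c i = 0" if "(\<Sum>i<n. c i *s e i) = 0" for c
      by (rule eigen_chain_independent[OF eV enz eig \<mu>0 that])
    fix i assume i: "i < n"
    show "coord n e (smult (- (w ^ i) * - \<mu>) (monom 1 i)) = H (e i)"
      using coord_monom[OF i] eig[of i] by simp
    show "coord n e (if i + 1 < n then monom 1 (i + 1) else 0) = X (e i)"
    proof (cases "i + 1 < n")
      case True
      then show ?thesis using coord_monom1[OF True] by (simp add: e_def)
    next
      case False
      then have "X (e i) = (X ^^ n) u" using i unfolding e_def
        by (metis Suc_eq_plus1 funpow.simps(2) le_SucE not_less o_apply)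
      then show ?thesis using False X0 u(1) coord_zero by simp
    qed
    show "coord n e (if i = 0 then 0 else smult ((1 - w ^ i) * - \<mu>) (monom 1 (i - 1))) = Y (e i)"
    proof (cases i)
      case 0
      then show ?thesis using u(3) coord_zero by (simp add: e_def)
    next
      case (Suc k)
      then show ?thesis using coord_monom[of k n e] Ye[of k] i by (simp add: algebra_simps)
    qed
  qed (use eV enz n_gt1 in \<open>auto simp: degree_monom_eq intro!: degree_smult_monom\<close>)
  then show ?thesis using \<mu>0 by (metis neg_equal_0_iff_equal)
qed

theorem classification:
  "(\<exists>a b. H_iso smult (polys_below 1) (modA_X a) (modA_Y b) modA_H sc V X Y H)
   \<or> (\<exists>a b z. a \<noteq> 0 \<and> b \<noteq> 0 \<and>
        H_iso smult (polys_below n) (modB_X n w a b) (modB_Y n w a b z) (modB_H n w a b) sc V X Y H)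
   \<or> (\<exists>a b j. a \<noteq> 0 \<and> b \<noteq> 0 \<and>
        H_iso smult (polys_below n) (modC_X n w a b j) (modC_Y n w a) (modC_H n w a b) sc V X Y H)
   \<or> (\<exists>z. z \<noteq> 0 \<and> H_iso smult (polys_below n) (modD_X n) (modD_Y n w z) (modD_H n w z) sc V X Y H)"
proof -
  obtain v l where v: "v \<in> V" "v \<noteq> 0" "H v = l *s v" using H_eigenvector by blast
  obtain \<alpha> where \<alpha>: "\<forall>u\<in>V. (X ^^ n) u = \<alpha> *s u" using central_scalar[OF central_Xpow] by blast
  obtain \<beta> where \<beta>: "\<forall>u\<in>V. (Y ^^ n) u = \<beta> *s u" using central_scalar[OF central_Ypow] by blast
  obtain \<gamma> where \<gamma>: "\<forall>u\<in>V. casimir u = \<gamma> *s u" using central_scalar[OF central_casimir] by blast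
  consider "l = 0" | "l \<noteq> 0" "\<alpha> \<noteq> 0" | "l \<noteq> 0" "\<alpha> = 0" "\<beta> \<noteq> 0" | "l \<noteq> 0" "\<alpha> = 0" "\<beta> = 0"
    by blast
  then show ?thesis
  proof cases
    case 1 then show ?thesis using module_a[OF v(1,2)] v(3) by simp
  next
    case 2 then show ?thesis using module_b[OF v _ \<alpha> _ \<gamma>] by blast
  next
    case 3 then show ?thesis using module_c[OF v _ _ \<beta> _ \<gamma>] \<alpha> by simp
  next
    case 4 then show ?thesis using module_d[OF v _ _ _ \<gamma>] \<alpha> \<beta> by simp
  qed
qed

end

section \<open>Reduction of \<open>f = wh + c\<close> to \<open>f = wh\<close>\<close>

lemma primitive_root_ne_1: "1 < n \<Longrightarrow> primitive_root_of_unity n w \<Longrightarrow> w \<noteq> 1"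
  unfolding primitive_root_of_unity_def by force

context complex_vs
begin

lemma op_poly_degree1: "op_poly scale [:c, w:] T v = c *s v + w *s T v"
  by (cases "w = 0") (simp_all add: op_poly_def)

text \<open>Since \<open>w \<noteq> 1\<close>, the affine map \<open>f(h) = wh + c\<close> has the fixed point \<open>h\<^sub>0 = c/(1 - w)\<close>;
  replacing \<open>h\<close> by \<open>h - h\<^sub>0\<close> turns an \<open>H(wh + c)\<close>-module into an \<open>H(wh)\<close>-module with the same
  submodules.\<close>

lemma shifted_simple_wh_module:
  assumes n: "1 < n" and prim: "primitive_root_of_unity n w"
    and M: "H_module scale V [:c, w:] X Y H" and S: "H_simple scale V X Y H"
  shows "simple_wh_module scale V X Y (\<lambda>v. H v - (c / (1 - w)) *s v) w n"
proof -
  define h0 where "h0 = c / (1 - w)"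
  have "1 - w \<noteq> 0" using primitive_root_ne_1[OF n prim] by simp
  then have "c = h0 * (1 - w)" unfolding h0_def by simp
  then have c: "c = h0 - w * h0" by (simp add: algebra_simps)
  have subV: "subspace V" and lin: "lin_op_on scale V X" "lin_op_on scale V Y" "lin_op_on scale V H"
    and m1: "\<And>v. v \<in> V \<Longrightarrow> H (X v) = X (c *s v + w *s H v)"
    and m2: "\<And>v. v \<in> V \<Longrightarrow> Y (H v) = c *s Y v + w *s H (Y v)"
    and m3: "\<And>v. v \<in> V \<Longrightarrow> Y (X v) - X (Y v) = c *s v + w *s H v - H v"
    using M unfolding H_module_def op_poly_degree1 by blast+
  note V_closed = lin_in[OF lin(1)] lin_in[OF lin(2)] lin_in[OF lin(3)] subspace_scale[OF subV]
    subspace_add[OF subV]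
  have shift: "w *s (u - h0 *s v) = c *s v + w *s u - h0 *s v" for u v
    unfolding c by (simp add: algebra_simps scale_left_diff_distrib scale_right_diff_distrib)
  show ?thesis
    unfolding h0_def[symmetric]
  proof unfold_locales
    show "lin_op_on scale V (\<lambda>v. H v - h0 *s v)" by (rule lin_shift[OF subV lin(3)])
    fix v assume v: "v \<in> V"
    show "H (X v) - h0 *s X v = X (w *s (H v - h0 *s v))"
      unfolding shift using v m1 V_closed
      by (simp add: lin_diff[OF subV lin(1)] lin_scale[OF lin(1)])
    show "Y (H v - h0 *s v) = w *s (H (Y v) - h0 *s Y v)"
      unfolding shift using v m2 V_closed
      by (simp add: lin_diff[OF subV lin(2)] lin_scale[OF lin(2)])
    show "Y (X v) - X (Y v) = (w - 1) *s (H v - h0 *s v)"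
      using m3[OF v] unfolding c by (simp add: algebra_simps scale_left_diff_distrib scale_right_diff_distrib)
  next
    have "W \<subseteq> V \<Longrightarrow> subspace W \<Longrightarrow> x \<in> W \<Longrightarrow> H x - h0 *s x \<in> W \<longleftrightarrow> H x \<in> W" for W x
      by (metis diff_add_cancel subspace_add subspace_diff subspace_scale)
    then show "H_simple scale V X Y (\<lambda>v. H v - h0 *s v)"
      using S unfolding H_simple_def by blast
  qed (use subV lin n prim in auto)
qed

end

theorem simple_module_fin_dim:
  fixes sc :: "complex \<Rightarrow> 'v::ab_group_add \<Rightarrow> 'v"
  assumes "1 < n" "primitive_root_of_unity n w"
    and M: "H_module sc V [:c, w:] X Y H" and "H_simple sc V X Y H"
  shows "fin_dim sc V"
proof -
  interpret complex_vs sc using M unfolding H_module_def complex_vs_def by blast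
  interpret simple_wh_module sc V X Y "\<lambda>v. H v - sc (c / (1 - w)) v" w n
    using shifted_simple_wh_module[OF assms] .
  show ?thesis by (rule finite_dimensional)
qed

text \<open>Every simple \<open>H(wh)\<close>-module is isomorphic to one of the models (a)-(d).\<close>

theorem simple_wh_module_classification:
  fixes sc :: "complex \<Rightarrow> 'v::ab_group_add \<Rightarrow> 'v"
  assumes "1 < n" "primitive_root_of_unity n w"
    and M: "H_module sc V [:0, w:] X Y H" and "H_simple sc V X Y H"
  shows "(\<exists>a b. H_iso smult (polys_below 1) (modA_X a) (modA_Y b) modA_H sc V X Y H)
   \<or> (\<exists>a b z. a \<noteq> 0 \<and> b \<noteq> 0 \<and>
        H_iso smult (polys_below n) (modB_X n w a b) (modB_Y n w a b z) (modB_H n w a b) sc V X Y H)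
   \<or> (\<exists>a b j. a \<noteq> 0 \<and> b \<noteq> 0 \<and>
        H_iso smult (polys_below n) (modC_X n w a b j) (modC_Y n w a) (modC_H n w a b) sc V X Y H)
   \<or> (\<exists>z. z \<noteq> 0 \<and> H_iso smult (polys_below n) (modD_X n) (modD_Y n w z) (modD_H n w z) sc V X Y H)"
proof -
  interpret complex_vs sc using M unfolding H_module_def complex_vs_def by blast
  interpret simple_wh_module sc V X Y H w n
    using shifted_simple_wh_module[OF assms] by simp
  show ?thesis by (rule classification)
qed

theorem mainTheorem14:
  fixes n :: nat and w c :: complex
  assumes "n > 1" and "primitive_root_of_unity n w"
  shows "(\<forall>(sc :: complex \<Rightarrow> 'v::ab_group_add \<Rightarrow> 'v) V X Y H.
            H_module sc V [:c, w:] X Y H \<and> H_simple sc V X Y H \<longrightarrow> fin_dim sc V)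
       \<and> (\<forall>(sc :: complex \<Rightarrow> 'v \<Rightarrow> 'v) V X Y H.
            H_module sc V [:0, w:] X Y H \<and> H_simple sc V X Y H \<and> fin_dim sc V \<longrightarrow>
              (\<exists>a b. H_iso smult (polys_below 1) (modA_X a) (modA_Y b) modA_H sc V X Y H)
            \<or> (\<exists>a b z. a \<noteq> 0 \<and> b \<noteq> 0 \<and>
                 H_iso smult (polys_below n) (modB_X n w a b) (modB_Y n w a b z) (modB_H n w a b)
                       sc V X Y H)
            \<or> (\<exists>a b j. a \<noteq> 0 \<and> b \<noteq> 0 \<and>
                 H_iso smult (polys_below n) (modC_X n w a b j) (modC_Y n w a) (modC_H n w a b)
                       sc V X Y H)
            \<or> (\<exists>z. z \<noteq> 0 \<and>
                 H_iso smult (polys_below n) (modD_X n) (modD_Y n w z) (modD_H n w z)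
                       sc V X Y H))"
  by (intro conjI allI impI; elim conjE)
    (erule (1) simple_module_fin_dim[OF assms], erule (1) simple_wh_module_classification[OF assms])

end
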